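(* Let $\mathcal{H}$ be a finite-dimensional complex Hilbert space, let $\rho$ be a density operator on $\mathcal{H}$ and let $\sigma$ be a positive semi-definite operator on $\mathcal{H}$ with $\ker\sigma\subseteq\ker\rho$, and let $z\in\mathbb{R}\setminus\{0\}$. Then $$\lim_{\alpha\to1}\frac{\partial}{\partial z}\operatorname{Tr}\Big(\big(\sigma^{\frac{1-\alpha}{2z}}\rho^{\frac{\alpha}{z}}\sigma^{\frac{1-\alpha}{2z}}\big)^z\Big)=0.$$
   Context: Real powers and logarithms of positive semi-definite operators are evaluated on their support (negative powers are generalized inverses). The partial derivative is taken with respect to $z$ with $\alpha$ held fixed. *)

theory Defs
  imports "HOL-Analysis.Analysis"
begin

text \<open>Operators on a finite-dimensional complex Hilbert space are modelled as
  complex square matrices indexed by a finite type 'n (the space is complex^'n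
  with the standard inner product).\<close>

definition adj :: "complex^'n^'m \<Rightarrow> complex^'m^'n" where
  "adj A = (\<chi> i j. cnj (A $ j $ i))"

definition hermitian :: "complex^'n^'n \<Rightarrow> bool" where
  "hermitian A \<longleftrightarrow> adj A = A"

definition unitary :: "complex^'n^'n \<Rightarrow> bool" where
  "unitary U \<longleftrightarrow> adj U ** U = mat 1 \<and> U ** adj U = mat 1"

definition cinner :: "complex^'n \<Rightarrow> complex^'n \<Rightarrow> complex" where
  "cinner x y = (\<Sum>i\<in>UNIV. cnj (x $ i) * y $ i)"

definition psd :: "complex^'n^'n \<Rightarrow> bool" where
  "psd A \<longleftrightarrow> hermitian A \<and> (\<forall>x. 0 \<le> Re (cinner x (A *v x)))"

definition density_operator :: "complex^'n^'n \<Rightarrow> bool" where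
  "density_operator A \<longleftrightarrow> psd A \<and> trace A = 1"

definition ker :: "complex^'n^'n \<Rightarrow> (complex^'n) set" where
  "ker A = {x. A *v x = 0}"

definition diag_mat :: "('n \<Rightarrow> real) \<Rightarrow> complex^'n^'n" where
  "diag_mat d = (\<chi> i j. if i = j then complex_of_real (d i) else 0)"

text \<open>Real power of a positive semi-definite operator, evaluated on its support
  (eigenvalue 0 is mapped to 0, so negative powers are generalized inverses),
  defined via a spectral decomposition A = U diag(d) U*.\<close>

definition mpow :: "complex^'n^'n \<Rightarrow> real \<Rightarrow> complex^'n^'n" where
  "mpow A p = (let (U, d) = (SOME (U, d). unitary U \<and> A = U ** diag_mat d ** adj U)
     in U ** diag_mat (\<lambda>i. if d i > 0 then d i powr p else 0) ** adj U)"

end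

theory Submission
  imports Defs "HOL-Complex_Analysis.Cauchy_Integral_Formula" "HOL-Analysis.Generalised_Binomial_Theorem"
begin

(*
  For real w, the operator X = sigma^((1-alpha)/(2w)) rho^(alpha/w) sigma^((1-alpha)/(2w)) of the
  theorem has the same nonzero spectrum as Y = rho^(alpha/(2w)) sigma^((1-alpha)/w) rho^(alpha/(2w)),
  and Y makes sense, and depends holomorphically on w, for all complex w <> 0. With P the support
  projection of rho and a suitable scale c, the operator T = c Y - P has norm < 1 near
  (alpha, w) = (1, z), so tr X^w = c^(-w) tr (P + T)^w is given by the binomial series
  Psi(alpha, w) = c^(-w) * sum_n (w choose n) tr (P T^n), which converges uniformly: Psi is jointly
  continuous and holomorphic in w. For alpha = 1 one has Y = rho^(1/w), so Psi(1, w) = tr rho = 1 and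
  the w-derivative vanishes at z; by Cauchy's estimate, joint continuity of Psi makes the
  w-derivative at z continuous in alpha, which yields the limit 0.
*)

section \<open>Matrices and the Hermitian inner product\<close>

definition cdiag :: "('n::finite \<Rightarrow> complex) \<Rightarrow> complex^'n^'n" where
  "cdiag f = (\<chi> i j. if i = j then f i else 0)"

lemma diag_mat_eq_cdiag: "diag_mat d = cdiag (\<lambda>i. complex_of_real (d i))"
  by (simp add: diag_mat_def cdiag_def)

lemma cdiag_mult: "cdiag f ** cdiag g = cdiag (\<lambda>i. f i * g i)"
  by (simp add: cdiag_def matrix_matrix_mult_def vec_eq_iff if_distrib[of "\<lambda>x. x * _"] cong: if_cong)

lemma matrix_mult_cdiag: "A ** cdiag f = (\<chi> i j. A$i$j * f j)"
  by (simp add: cdiag_def matrix_matrix_mult_def vec_eq_iff if_distrib[of "\<lambda>x. _ * x"] cong: if_cong)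

lemma cdiag_one: "cdiag (\<lambda>i. 1) = mat 1"
  by (simp add: cdiag_def mat_def vec_eq_iff)

lemma cdiag_diff: "cdiag f - cdiag g = cdiag (\<lambda>i. f i - g i)"
  by (simp add: cdiag_def vec_eq_iff)

lemma cdiag_scaleR: "c *\<^sub>R cdiag f = cdiag (\<lambda>i. of_real c * f i)"
  by (simp add: cdiag_def vec_eq_iff) (simp add: scaleR_conv_of_real)

lemma trace_cdiag: "trace (cdiag f) = (\<Sum>i\<in>UNIV. f i)"
  by (simp add: cdiag_def trace_def)

lemma cdiag_mult_vec: "(cdiag f *v y) $ i = f i * y $ i"
  by (simp add: cdiag_def matrix_vector_mult_def if_distrib[of "\<lambda>x. x * _"] cong: if_cong)

lemma adj_adj [simp]: "adj (adj A) = A"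
  by (simp add: adj_def vec_eq_iff)

lemma adj_mult: "adj (A ** B) = adj B ** adj A"
  by (simp add: adj_def matrix_matrix_mult_def vec_eq_iff mult.commute)

lemma adj_cdiag: "adj (cdiag f) = cdiag (\<lambda>i. cnj (f i))"
  by (simp add: adj_def cdiag_def vec_eq_iff)

lemma unitary_adj: "unitary U \<Longrightarrow> unitary (adj U)"
  by (simp add: unitary_def)

lemma unitary_conj_cancel: "unitary U \<Longrightarrow> adj U ** (U ** A ** adj U) ** U = A"
  by (simp add: unitary_def matrix_mul_assoc) (simp add: matrix_mul_assoc[symmetric])

lemma unitary_mult_cancel: "unitary U \<Longrightarrow> X ** adj U ** U = X"
  by (simp add: unitary_def flip: matrix_mul_assoc)

lemma trace_unitary_conj: "unitary U \<Longrightarrow> trace (U ** A ** adj U) = trace A"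
  by (metis matrix_mul_assoc matrix_mul_lid trace_mul_sym unitary_def)

lemma trace_scaleR: "trace (c *\<^sub>R (A::complex^'n^'n)) = of_real c * trace A"
  unfolding trace_def by (simp only: vector_scaleR_component) (simp add: scaleR_conv_of_real sum_distrib_left)

lemma matrix_diff_ldistrib: "(A::'a::ring_1^'n^'m) ** (B - C) = A ** B - A ** C"
  by (simp add: matrix_matrix_mult_def vec_eq_iff sum_subtractf right_diff_distrib)

lemma matrix_diff_rdistrib: "((A::'a::ring_1^'n^'m) - B) ** C = A ** C - B ** C"
  by (simp add: matrix_matrix_mult_def vec_eq_iff sum_subtractf left_diff_distrib)

lemma matrix_vector_scaleR_commute: "(A::'a::real_algebra_1^'n^'m) *v (c *\<^sub>R x) = c *\<^sub>R (A *v x)"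
  by (simp add: vec_eq_iff matrix_vector_mult_def scaleR_sum_right)

lemma scaleR_eq_vector_scalar_mult: "c *\<^sub>R (x::complex^'n) = of_real c *s x"
proof (subst vec_eq_iff, intro allI)
  fix i
  have "(c *\<^sub>R x)$i = c *\<^sub>R (x$i)"
    by simp
  also have "\<dots> = of_real c * x$i"
    by (rule scaleR_conv_of_real)
  finally show "(c *\<^sub>R x)$i = (of_real c *s x)$i"
    by simp
qed

lemma cinner_zero_left [simp]: "cinner 0 x = 0"
  by (simp add: cinner_def)

lemma cinner_add_left: "cinner (x + y) z = cinner x z + cinner y z"
  by (simp add: cinner_def distrib_right sum.distrib)

lemma cinner_add_right: "cinner x (y + z) = cinner x y + cinner x z"
  by (simp add: cinner_def distrib_left sum.distrib)

lemma cinner_diff_right: "cinner x (y - z) = cinner x y - cinner x z"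
  by (simp add: cinner_def right_diff_distrib sum_subtractf)

lemma cinner_scale_left: "cinner (c *s x) y = cnj c * cinner x y"
  by (simp add: cinner_def sum_distrib_left mult.assoc)

lemma cinner_scale_right: "cinner x (c *s y) = c * cinner x y"
  by (simp add: cinner_def sum_distrib_left mult.left_commute)

lemma cinner_scaleR_left: "cinner (c *\<^sub>R x) y = of_real c * cinner x y"
  by (simp add: scaleR_eq_vector_scalar_mult cinner_scale_left)

lemma cinner_scaleR_right: "cinner x (c *\<^sub>R y) = of_real c * cinner x y"
  by (simp add: scaleR_eq_vector_scalar_mult cinner_scale_right)

lemma cnj_cinner: "cnj (cinner x y) = cinner y x"
  by (simp add: cinner_def mult.commute)

lemma cinner_matrix_vector_mult: "cinner x (A *v y) = cinner (adj A *v x) y"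
proof -
  have "cinner x (A *v y) = (\<Sum>i\<in>UNIV. \<Sum>j\<in>UNIV. cnj (x$i) * A$i$j * y$j)"
    by (simp add: cinner_def matrix_vector_mult_def sum_distrib_left mult.assoc)
  also have "\<dots> = (\<Sum>j\<in>UNIV. \<Sum>i\<in>UNIV. cnj (x$i) * A$i$j * y$j)"
    by (rule sum.swap)
  also have "\<dots> = cinner (adj A *v x) y"
    by (simp add: cinner_def adj_def matrix_vector_mult_def sum_distrib_right sum_distrib_left mult_ac)
  finally show ?thesis .
qed

lemma hermitian_cinner: "hermitian A \<Longrightarrow> cinner x (A *v y) = cinner (A *v x) y"
  by (simp add: hermitian_def cinner_matrix_vector_mult)

lemma cinner_cdiag: "cinner y (cdiag f *v y) = (\<Sum>i\<in>UNIV. f i * of_real ((cmod (y$i))^2))"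
  unfolding cinner_def cdiag_mult_vec
  by (intro sum.cong refl) (metis complex_norm_square mult.assoc mult.commute)

lemma cinner_self: "cinner x x = of_real ((norm x)^2)"
proof -
  have "cinner x x = cinner x (cdiag (\<lambda>i. 1) *v x)"
    by (simp add: cdiag_one)
  also have "\<dots> = of_real (\<Sum>i\<in>UNIV. (cmod (x$i))^2)"
    by (simp add: cinner_cdiag)
  finally show ?thesis
    by (simp add: norm_vec_def L2_set_def sum_nonneg)
qed


section \<open>The spectral theorem for Hermitian matrices\<close>

lemma linear_le_quadratic_imp_zero:
  fixes p C :: real
  assumes "\<And>t. 2 * t * p \<le> t^2 * C"
  shows "p = 0"
proof (rule ccontr)
  assume p: "p \<noteq> 0"
  define k where "k = \<bar>C\<bar> + 1"
  have k: "k > 0"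
    by (simp add: k_def add_pos_nonneg)
  have "2 * (p/k) * p \<le> (p/k)^2 * C"
    by (rule assms)
  also have "\<dots> \<le> (p/k)^2 * k"
    by (rule mult_left_mono) (auto simp: k_def)
  also have "\<dots> = p * (p / k)"
    using k by (simp add: power2_eq_square)
  finally have "p * (p / k) \<le> 0"
    by simp
  moreover have "p * (p / k) > 0"
    using p k by (simp flip: power2_eq_square)
  ultimately show False
    by linarith
qed

lemma hermitian_mat_1: "hermitian (mat 1)"
  by (simp add: hermitian_def adj_def mat_def vec_eq_iff)

lemma Re_cinner_hermitian_quadratic:
  assumes "hermitian A"
  shows "Re (cinner (u + t *\<^sub>R y) (A *v (u + t *\<^sub>R y)))
    = Re (cinner u (A *v u)) + 2 * t * Re (cinner y (A *v u)) + t^2 * Re (cinner y (A *v y))"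
proof -
  have "Re (cinner u (A *v y)) = Re (cinner y (A *v u))"
    using hermitian_cinner[OF assms, of u y] cnj_cinner[of y "A *v u"] by (metis cnj.sel(1))
  then show ?thesis
    by (simp add: matrix_vector_right_distrib matrix_vector_scaleR_commute cinner_add_left cinner_add_right
        cinner_scaleR_left cinner_scaleR_right power2_eq_square algebra_simps)
qed

text \<open>Perturbing \<open>u\<close> to \<open>u + t y\<close> shows that \<open>A u - \<lambda> u\<close>, which lies in \<open>W\<close>, is orthogonal
  to \<open>W\<close>.\<close>
lemma rayleigh_maximizer_is_eigenvector:
  fixes A :: "complex^'n^'n"
  assumes herm: "hermitian A"
    and W_add: "\<And>x y. x \<in> W \<Longrightarrow> y \<in> W \<Longrightarrow> x + y \<in> W"
    and W_scale: "\<And>c x. x \<in> W \<Longrightarrow> c *s x \<in> W"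
    and A_W: "\<And>x. x \<in> W \<Longrightarrow> A *v x \<in> W"
    and u: "u \<in> W" "cinner u u = 1"
    and max: "\<And>x. x \<in> W \<Longrightarrow> Re (cinner x (A *v x)) \<le> Re (cinner u (A *v u)) * Re (cinner x x)"
  shows "A *v u = of_real (Re (cinner u (A *v u))) *s u"
proof -
  define lam where "lam = Re (cinner u (A *v u))"
  have W_scaleR: "c *\<^sub>R x \<in> W" if "x \<in> W" for c x
    using W_scale that by (simp add: scaleR_eq_vector_scalar_mult)
  define v where "v = A *v u - lam *\<^sub>R u"
  have v: "v \<in> W"
    using W_add[OF A_W[OF u(1)] W_scaleR[OF u(1), of "- lam"]] by (simp add: v_def)
  have Re_orth: "Re (cinner y v) = 0" if y: "y \<in> W" for y
  proof (rule linear_le_quadratic_imp_zero)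
    fix t :: real
    let ?x = "u + t *\<^sub>R y"
    have x: "?x \<in> W"
      using W_add[OF u(1) W_scaleR[OF y]] .
    have e1: "Re (cinner ?x (A *v ?x)) = lam + 2 * t * Re (cinner y (A *v u)) + t^2 * Re (cinner y (A *v y))"
      unfolding lam_def by (rule Re_cinner_hermitian_quadratic[OF herm])
    have e2: "Re (cinner ?x ?x) = 1 + 2 * t * Re (cinner y u) + t^2 * Re (cinner y y)"
      using Re_cinner_hermitian_quadratic[OF hermitian_mat_1, of u t y] u(2) by simp
    have e3: "Re (cinner y v) = Re (cinner y (A *v u)) - lam * Re (cinner y u)"
      by (simp add: v_def cinner_diff_right cinner_scaleR_right)
    have "Re (cinner ?x (A *v ?x)) \<le> lam * Re (cinner ?x ?x)"
      using max[OF x] by (simp add: lam_def)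
    then show "2 * t * Re (cinner y v) \<le> t^2 * (lam * Re (cinner y y) - Re (cinner y (A *v y)))"
      unfolding e1 e2 e3 by (simp add: algebra_simps)
  qed
  have "cinner y v = 0" if y: "y \<in> W" for y
  proof -
    have "Re (cinner (\<i> *s y) v) = 0"
      by (rule Re_orth) (rule W_scale[OF y])
    then show ?thesis
      using Re_orth[OF y] by (simp add: cinner_scale_left complex_eq_iff)
  qed
  then have "v = 0"
    using v by (metis cinner_self norm_eq_zero of_real_eq_0_iff zero_eq_power2)
  then show ?thesis
    by (simp add: v_def lam_def scaleR_eq_vector_scalar_mult)
qed

lemma hermitian_eigenvector_orthogonal:
  fixes A :: "complex^'n^'n"
  assumes herm: "hermitian A" and W: "W = {x. \<forall>e\<in>E. cinner e x = 0}"
    and A_W: "\<And>x. x \<in> W \<Longrightarrow> A *v x \<in> W" and x0: "x0 \<in> W" "x0 \<noteq> 0"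
  shows "\<exists>u\<in>W. cinner u u = 1 \<and> (\<exists>l::real. A *v u = of_real l *s u)"
proof -
  have W_add: "x + y \<in> W" if "x \<in> W" "y \<in> W" for x y
    using that by (simp add: W cinner_add_right)
  have W_scale: "c *s x \<in> W" if "x \<in> W" for c x
    using that by (simp add: W cinner_scale_right)
  have W_scaleR: "c *\<^sub>R x \<in> W" if "x \<in> W" for c x
    using W_scale[OF that] by (simp only: scaleR_eq_vector_scalar_mult)
  have "W = (\<Inter>e\<in>E. cinner e -` {0})"
    by (auto simp: W)
  moreover have "continuous_on UNIV (cinner e :: complex^'n \<Rightarrow> complex)" for e
    unfolding cinner_def by (intro continuous_intros)
  ultimately have "closed W"
    by (auto intro: closed_vimage)
  then have K: "compact (sphere 0 1 \<inter> W)"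
    by (intro compact_Int_closed) simp_all
  define f where "f x = Re (cinner x (A *v x))" for x
  have "continuous_on (sphere 0 1 \<inter> W) f"
    unfolding f_def cinner_def matrix_vector_mult_def by (intro continuous_intros)
  moreover have "(1 / norm x0) *\<^sub>R x0 \<in> sphere 0 1 \<inter> W"
    using x0 W_scaleR by simp
  ultimately obtain u where u: "u \<in> W" "norm u = 1"
    and umax: "\<And>y. y \<in> sphere 0 1 \<inter> W \<Longrightarrow> f y \<le> f u"
    using continuous_attains_sup[OF K] by (metis IntE empty_iff mem_sphere_0)
  have uu: "cinner u u = 1"
    using u by (simp add: cinner_self)
  have "f x \<le> f u * Re (cinner x x)" if x: "x \<in> W" for x
  proof (cases "x = 0")
    case False
    have "f ((1 / norm x) *\<^sub>R x) \<le> f u"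
      using False W_scaleR[OF x] by (intro umax) simp
    then show ?thesis
      using False
      by (simp add: f_def cinner_self matrix_vector_scaleR_commute cinner_scaleR_left
          cinner_scaleR_right power2_eq_square field_simps)
  qed (simp add: f_def)
  then have "A *v u = of_real (f u) *s u"
    unfolding f_def by (intro rayleigh_maximizer_is_eigenvector[OF herm W_add W_scale A_W u(1) uu])
  then show ?thesis
    using u(1) uu by blast
qed

text \<open>The linear map \<open>x \<mapsto> (\<langle>v k, x\<rangle>)\<^sub>k\<^sub>\<in>\<^sub>F\<close> vanishes in row \<open>j \<notin> F\<close>, so it is not invertible.\<close>
lemma orthogonal_nonzero_exists:
  fixes v :: "'n \<Rightarrow> complex^'n"
  assumes "j \<notin> F"
  shows "\<exists>x. x \<noteq> 0 \<and> (\<forall>i\<in>F. cinner (v i) x = 0)"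
proof -
  define M :: "complex^'n^'n" where "M = (\<chi> k i. if k \<in> F then cnj (v k $ i) else 0)"
  have "\<exists>x. x \<noteq> 0 \<and> M *v x = 0"
  proof (rule ccontr)
    assume "\<nexists>x. x \<noteq> 0 \<and> M *v x = 0"
    then obtain B where "B ** M = mat 1"
      using matrix_left_invertible_ker by blast
    then have "M ** B = mat 1"
      using matrix_left_right_inverse by blast
    then have "(M ** B)$j$j = 1"
      by (simp add: mat_def)
    moreover have "(M ** B)$j$j = 0"
      using assms by (simp add: matrix_matrix_mult_def M_def)
    ultimately show False
      by simp
  qed
  then obtain x where x: "x \<noteq> 0" "M *v x = 0"
    by blast
  have "cinner (v i) x = (M *v x)$i" if "i \<in> F" for i
    using that by (simp add: M_def matrix_vector_mult_def cinner_def)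
  then show ?thesis
    using x by auto
qed

lemma hermitian_orthonormal_eigenvectors:
  fixes A :: "complex^'n^'n" and F :: "'n set"
  assumes herm: "hermitian A" and "finite F"
  shows "\<exists>(v::'n \<Rightarrow> complex^'n) (l::'n \<Rightarrow> real).
           (\<forall>i\<in>F. \<forall>j\<in>F. cinner (v i) (v j) = (if i = j then 1 else 0)) \<and>
           (\<forall>i\<in>F. A *v v i = of_real (l i) *s v i)"
  using assms(2)
proof (induction F rule: finite_induct)
  case (insert j F)
  obtain v l where orth: "\<forall>i\<in>F. \<forall>k\<in>F. cinner (v i) (v k) = (if i = k then 1 else 0)"
    and eig: "\<forall>i\<in>F. A *v v i = of_real (l i) *s v i"
    using insert.IH by blast
  define W where "W = {x. \<forall>e\<in>v`F. cinner e x = 0}"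
  have A_W: "A *v x \<in> W" if x: "x \<in> W" for x
  proof -
    have "cinner (v i) (A *v x) = cnj (of_real (l i)) * cinner (v i) x" if "i \<in> F" for i
      using eig that by (simp add: hermitian_cinner[OF herm] cinner_scale_left)
    then show ?thesis
      using x by (simp add: W_def)
  qed
  obtain x0 where "x0 \<noteq> 0" "\<forall>i\<in>F. cinner (v i) x0 = 0"
    using orthogonal_nonzero_exists[OF insert.hyps(2)] by blast
  then have x0: "x0 \<in> W" "x0 \<noteq> 0"
    by (simp_all add: W_def)
  obtain u lam where u: "u \<in> W" "cinner u u = 1" and ueig: "A *v u = of_real lam *s u"
    using hermitian_eigenvector_orthogonal[OF herm W_def A_W x0] by blast
  have vu: "cinner (v i) u = 0" if "i \<in> F" for i
    using u(1) that by (simp add: W_def)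
  then have uv: "cinner u (v i) = 0" if "i \<in> F" for i
    using that cnj_cinner[of "v i" u] by simp
  have "\<forall>i\<in>insert j F. \<forall>k\<in>insert j F. cinner ((v(j := u)) i) ((v(j := u)) k) = (if i = k then 1 else 0)"
    using orth vu uv u(2) insert.hyps(2) by auto
  moreover have "\<forall>i\<in>insert j F. A *v (v(j := u)) i = of_real ((l(j := lam)) i) *s (v(j := u)) i"
    using eig ueig insert.hyps(2) by auto
  ultimately show ?case
    by blast
qed simp

theorem hermitian_spectral_decomposition:
  fixes A :: "complex^'n^'n"
  assumes "hermitian A"
  shows "\<exists>U d. unitary U \<and> A = U ** diag_mat d ** adj U"
proof -
  obtain v :: "'n \<Rightarrow> complex^'n" and l :: "'n \<Rightarrow> real"
    where orth: "\<forall>i j. cinner (v i) (v j) = (if i = j then 1 else 0)"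
      and eig: "\<forall>i. A *v v i = of_real (l i) *s v i"
    using hermitian_orthonormal_eigenvectors[OF assms, of UNIV] by auto
  define U :: "complex^'n^'n" where "U = (\<chi> i j. v j $ i)"
  have UU: "adj U ** U = mat 1"
    using orth by (simp add: vec_eq_iff adj_def matrix_matrix_mult_def cinner_def mat_def U_def)
  then have UU': "U ** adj U = mat 1"
    using matrix_left_right_inverse by blast
  have "(A ** U)$i$k = (A *v v k)$i" for i k
    by (simp add: matrix_matrix_mult_def matrix_vector_mult_def U_def)
  then have AU: "A ** U = U ** diag_mat l"
    using eig by (simp add: vec_eq_iff diag_mat_eq_cdiag matrix_mult_cdiag U_def mult.commute)
  have "A = A ** (U ** adj U)"
    by (simp add: UU')
  also have "\<dots> = U ** diag_mat l ** adj U"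
    by (simp add: matrix_mul_assoc AU)
  finally show ?thesis
    using UU UU' unfolding unitary_def by blast
qed


section \<open>Functional calculus\<close>

lemma matrix_mult_zero_right [simp]: "(A::'a::semiring_1^'n^'m) ** 0 = 0"
  by (simp add: matrix_matrix_mult_def vec_eq_iff)

lemma psd_diag_decomposition_nonneg:
  assumes "psd A" "unitary U" "A = U ** diag_mat d ** adj U"
  shows "d i \<ge> 0"
proof -
  define x where "x = U *v axis i 1"
  have "adj U *v x = axis i 1"
    using assms(2) by (simp add: x_def matrix_vector_mul_assoc unitary_def)
  then have "cinner x (A *v x) = cinner (axis i 1) (diag_mat d *v axis i 1)"
    by (simp add: assms(3) cinner_matrix_vector_mult matrix_vector_mul_assoc[symmetric])
  also have "\<dots> = of_real (d i)"
  proof -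
    have "complex_of_real (d j) * of_real ((cmod (axis i 1 $ j))^2) = (if j = i then of_real (d i) else 0)" for j
      by (simp add: axis_def)
    then show ?thesis
      by (simp add: diag_mat_eq_cdiag cinner_cdiag)
  qed
  finally show ?thesis
    using assms(1) unfolding psd_def by (metis Re_complex_of_real)
qed

definition eig_decomp :: "complex^'n^'n \<Rightarrow> (complex^'n^'n) \<times> ('n \<Rightarrow> real)" where
  "eig_decomp A = (SOME (U, d). unitary U \<and> A = U ** diag_mat d ** adj U)"

abbreviation eigvecs :: "complex^'n^'n \<Rightarrow> complex^'n^'n" where
  "eigvecs A \<equiv> fst (eig_decomp A)"

abbreviation eigvals :: "complex^'n^'n \<Rightarrow> 'n \<Rightarrow> real" where
  "eigvals A \<equiv> snd (eig_decomp A)"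

lemma eig_decomp:
  assumes "hermitian A"
  shows "unitary (eigvecs A)" "A = eigvecs A ** diag_mat (eigvals A) ** adj (eigvecs A)"
proof -
  obtain U d where "unitary U \<and> A = U ** diag_mat d ** adj U"
    using hermitian_spectral_decomposition[OF assms] by blast
  then have "\<exists>x. (\<lambda>(U, d). unitary U \<and> A = U ** diag_mat d ** adj U) x"
    by blast
  then have "(\<lambda>(U, d). unitary U \<and> A = U ** diag_mat d ** adj U) (eig_decomp A)"
    unfolding eig_decomp_def by (rule someI_ex)
  then show "unitary (eigvecs A)" "A = eigvecs A ** diag_mat (eigvals A) ** adj (eigvecs A)"
    by (simp_all add: split_beta)
qed

lemma psd_hermitian: "psd A \<Longrightarrow> hermitian A"
  by (simp add: psd_def)

lemma psd_eigvals_nonneg: "psd A \<Longrightarrow> eigvals A i \<ge> 0"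
  using psd_diag_decomposition_nonneg eig_decomp psd_hermitian by blast

text \<open>The functional calculus uses the same (chosen) eigenbasis as \<open>mpow\<close>, so the two agree on
  the nose and not only up to the choice of eigenbasis.\<close>
definition matfun :: "complex^'n^'n \<Rightarrow> (real \<Rightarrow> complex) \<Rightarrow> complex^'n^'n" where
  "matfun A f = eigvecs A ** cdiag (\<lambda>i. f (eigvals A i)) ** adj (eigvecs A)"

lemma mpow_eq_matfun: "mpow A p = matfun A (\<lambda>x. if x > 0 then of_real (x powr p) else 0)"
  by (simp add: mpow_def matfun_def eig_decomp_def split_beta diag_mat_eq_cdiag Let_def if_distrib
      cong: if_cong)

lemma matfun_cong: "(\<And>i. f (eigvals A i) = g (eigvals A i)) \<Longrightarrow> matfun A f = matfun A g"
  by (simp add: matfun_def)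

lemma matfun_of_real: "hermitian A \<Longrightarrow> matfun A of_real = A"
  using eig_decomp(2)[of A] by (simp add: matfun_def diag_mat_eq_cdiag)

lemma matfun_one: "hermitian A \<Longrightarrow> matfun A (\<lambda>x. 1) = mat 1"
  using eig_decomp(1)[of A] by (simp add: matfun_def cdiag_one unitary_def)

lemma matfun_mult: "hermitian A \<Longrightarrow> matfun A f ** matfun A g = matfun A (\<lambda>x. f x * g x)"
proof -
  let ?U = "eigvecs A"
  assume "hermitian A"
  then have "adj ?U ** ?U = mat 1"
    using eig_decomp(1) unitary_def by blast
  then have "matfun A f ** matfun A g
      = ?U ** (cdiag (\<lambda>i. f (eigvals A i)) ** cdiag (\<lambda>i. g (eigvals A i))) ** adj ?U"
    by (simp add: matfun_def matrix_mul_assoc) (simp add: matrix_mul_assoc[symmetric])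
  then show ?thesis
    by (simp add: matfun_def cdiag_mult)
qed

lemma matfun_diff: "matfun A f - matfun A g = matfun A (\<lambda>x. f x - g x)"
  by (simp add: matfun_def cdiag_diff[symmetric] matrix_diff_ldistrib matrix_diff_rdistrib)

lemma trace_matfun: "hermitian A \<Longrightarrow> trace (matfun A f) = (\<Sum>i\<in>UNIV. f (eigvals A i))"
  using eig_decomp(1)[of A] by (simp add: matfun_def trace_unitary_conj trace_cdiag)

lemma matfun_in_eigenbasis:
  "hermitian A \<Longrightarrow> adj (eigvecs A) ** matfun A f ** eigvecs A = cdiag (\<lambda>i. f (eigvals A i))"
  unfolding matfun_def by (rule unitary_conj_cancel[OF eig_decomp(1)])

lemma hermitian_matfun: "(\<And>x. cnj (f x) = f x) \<Longrightarrow> hermitian (matfun A f)"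
  by (simp add: hermitian_def matfun_def adj_mult adj_cdiag matrix_mul_assoc)

lemma psd_matfun:
  assumes "\<And>x. f x = of_real (g x)" "\<And>x. g x \<ge> 0"
  shows "psd (matfun A f)"
  unfolding psd_def
proof (intro conjI allI)
  show "hermitian (matfun A f)"
    using assms(1) by (intro hermitian_matfun) simp
  fix x
  let ?y = "adj (eigvecs A) *v x"
  have "matfun A f *v x = eigvecs A *v (cdiag (\<lambda>i. f (eigvals A i)) *v ?y)"
    by (simp add: matfun_def matrix_vector_mul_assoc matrix_mul_assoc)
  then have "cinner x (matfun A f *v x) = cinner ?y (cdiag (\<lambda>i. f (eigvals A i)) *v ?y)"
    by (simp only: cinner_matrix_vector_mult[of x "eigvecs A"])
  also have "\<dots> = of_real (\<Sum>i\<in>UNIV. g (eigvals A i) * (cmod (?y$i))^2)"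
    by (simp add: cinner_cdiag assms(1))
  finally show "0 \<le> Re (cinner x (matfun A f *v x))"
    using assms(2) by (simp add: sum_nonneg)
qed

lemma psd_hermitian_sandwich:
  assumes "hermitian S" "psd R"
  shows "psd (S ** R ** S)"
  unfolding psd_def
proof (intro conjI allI)
  show "hermitian (S ** R ** S)"
    using assms by (simp add: hermitian_def psd_def adj_mult matrix_mul_assoc)
  fix x
  have "cinner x ((S ** R ** S) *v x) = cinner (S *v x) (R *v (S *v x))"
    using hermitian_cinner[OF assms(1)] by (simp add: matrix_vector_mul_assoc[symmetric])
  then show "0 \<le> Re (cinner x ((S ** R ** S) *v x))"
    using assms(2) by (simp add: psd_def)
qed

text \<open>\<open>mpowc A 0\<close> is the projection onto the support of \<open>A\<close>.\<close>
definition mpowc :: "complex^'n^'n \<Rightarrow> complex \<Rightarrow> complex^'n^'n" where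
  "mpowc A p = matfun A (\<lambda>x. if x > 0 then exp (p * of_real (ln x)) else 0)"

lemma mpow_eq_mpowc: "mpow A p = mpowc A (of_real p)"
  unfolding mpow_eq_matfun mpowc_def
  by (rule matfun_cong) (simp add: powr_def exp_of_real[symmetric])

lemma mpowc_add: "hermitian A \<Longrightarrow> mpowc A p ** mpowc A q = mpowc A (p + q)"
  unfolding mpowc_def
  by (simp add: matfun_mult) (rule matfun_cong, simp add: exp_add[symmetric] distrib_right)

lemma mpowc_1:
  assumes "psd A"
  shows "mpowc A 1 = A"
proof -
  have "mpowc A 1 = matfun A of_real"
    unfolding mpowc_def
  proof (rule matfun_cong)
    fix i
    show "(if eigvals A i > 0 then exp (1 * of_real (ln (eigvals A i))) else 0) = of_real (eigvals A i)"
      using psd_eigvals_nonneg[OF assms, of i] by (auto simp: exp_of_real)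
  qed
  then show ?thesis
    using matfun_of_real[OF psd_hermitian[OF assms]] by simp
qed

lemma hermitian_mpowc_of_real: "hermitian (mpowc A (of_real p))"
  unfolding mpowc_def by (rule hermitian_matfun) (simp add: exp_of_real flip: of_real_mult)

lemma matrix_mult_zero_if_ker_subset:
  assumes "ker A \<subseteq> ker B" "A ** X = 0"
  shows "B ** X = 0"
proof -
  have "(B ** X)$i$j = 0" for i j
  proof -
    define c where "c = (\<chi> k. X$k$j)"
    have "A *v c = 0"
      using assms(2) by (simp add: c_def vec_eq_iff matrix_vector_mult_def matrix_matrix_mult_def)
    then have "B *v c = 0"
      using assms(1) by (auto simp: ker_def)
    then show ?thesis
      by (simp add: c_def vec_eq_iff matrix_vector_mult_def matrix_matrix_mult_def)
  qed
  then show ?thesis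
    by (simp add: vec_eq_iff)
qed

text \<open>\<open>1 - \<sigma>\<^sup>0\<close> is the projection onto \<open>ker \<sigma> \<subseteq> ker \<rho>\<close>.\<close>
lemma support_projection_absorbs:
  assumes "psd \<sigma>" "psd \<rho>" "ker \<sigma> \<subseteq> ker \<rho>"
  shows "\<rho> ** mpowc \<sigma> 0 = \<rho>" "mpowc \<sigma> 0 ** \<rho> = \<rho>"
proof -
  let ?U = "eigvecs \<sigma>" and ?s = "eigvals \<sigma>"
  have herm: "hermitian \<sigma>" "hermitian \<rho>"
    using assms(1,2) by (simp_all add: psd_hermitian)
  define Z where "Z = cdiag (\<lambda>i. if ?s i > 0 then 0 else 1)"
  have "mat 1 - mpowc \<sigma> 0 = ?U ** Z ** adj ?U"
    unfolding mpowc_def matfun_one[OF herm(1), symmetric] matfun_diff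
    by (simp add: matfun_def Z_def if_distrib[of "\<lambda>x. 1 - x"] cong: if_cong)
  moreover have "\<sigma> ** (?U ** Z) = 0"
  proof -
    have "\<sigma> ** ?U = ?U ** diag_mat ?s ** (adj ?U ** ?U)"
      using eig_decomp(2)[OF herm(1)] by (metis matrix_mul_assoc)
    then have \<sigma>U: "\<sigma> ** ?U = ?U ** diag_mat ?s"
      using eig_decomp(1)[OF herm(1)] by (simp add: unitary_def)
    have "(\<lambda>i. complex_of_real (?s i) * (if ?s i > 0 then 0 else 1)) = (\<lambda>i. 0)"
      using psd_eigvals_nonneg[OF assms(1)] by (auto simp: fun_eq_iff less_eq_real_def)
    then have "diag_mat ?s ** Z = 0"
      unfolding diag_mat_eq_cdiag Z_def cdiag_mult by (simp add: cdiag_def vec_eq_iff)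
    then show ?thesis
      by (metis \<sigma>U matrix_mul_assoc matrix_mult_zero_right)
  qed
  then have "\<rho> ** (?U ** Z) = 0"
    by (rule matrix_mult_zero_if_ker_subset[OF assms(3)])
  ultimately have "\<rho> ** (mat 1 - mpowc \<sigma> 0) = 0"
    by (simp add: matrix_mul_assoc)
  then show rho: "\<rho> ** mpowc \<sigma> 0 = \<rho>"
    by (simp add: matrix_diff_ldistrib)
  have "adj (\<rho> ** mpowc \<sigma> 0) = adj \<rho>"
    by (simp add: rho)
  then show "mpowc \<sigma> 0 ** \<rho> = \<rho>"
    using hermitian_mpowc_of_real[of \<sigma> 0] herm(2) by (simp add: adj_mult hermitian_def)
qed

lemma support_projection_absorbs_mpowc:
  assumes "psd \<sigma>" "psd \<rho>" "ker \<sigma> \<subseteq> ker \<rho>"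
  shows "mpowc \<sigma> 0 ** mpowc \<rho> p = mpowc \<rho> p" "mpowc \<rho> p ** mpowc \<sigma> 0 = mpowc \<rho> p"
proof -
  have herm: "hermitian \<rho>"
    using assms(2) by (rule psd_hermitian)
  have l: "mpowc \<rho> p = \<rho> ** mpowc \<rho> (p - 1)" and r: "mpowc \<rho> p = mpowc \<rho> (p - 1) ** \<rho>"
    using mpowc_add[OF herm, of 1 "p - 1"] mpowc_add[OF herm, of "p - 1" 1] mpowc_1[OF assms(2)] by simp_all
  show "mpowc \<sigma> 0 ** mpowc \<rho> p = mpowc \<rho> p"
    by (subst (1 2) l) (simp add: matrix_mul_assoc support_projection_absorbs[OF assms])
  show "mpowc \<rho> p ** mpowc \<sigma> 0 = mpowc \<rho> p"
    by (subst (1 2) r) (simp add: matrix_mul_assoc[symmetric] support_projection_absorbs[OF assms])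
qed


section \<open>Matrix powers and the row sum norm\<close>

primrec matpow :: "complex^'n^'n \<Rightarrow> nat \<Rightarrow> complex^'n^'n" where
  "matpow A 0 = mat 1"
| "matpow A (Suc n) = A ** matpow A n"

lemma matpow_commute: "A ** B = B ** A \<Longrightarrow> matpow A n ** B = B ** matpow A n"
  by (induction n) (simp_all add: matrix_mul_assoc[symmetric], simp add: matrix_mul_assoc)

lemma matpow_Suc': "matpow A (Suc n) = matpow A n ** A"
  using matpow_commute[of A A n] by simp

lemma matpow_unitary_conj:
  assumes "unitary U"
  shows "matpow (U ** A ** adj U) n = U ** matpow A n ** adj U"
proof (induction n)
  case 0
  then show ?case
    using assms by (simp add: unitary_def)
next
  case (Suc n)
  have "matpow (U ** A ** adj U) (Suc n) = U ** A ** (adj U ** U) ** matpow A n ** adj U"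
    by (simp only: matpow.simps Suc matrix_mul_assoc)
  also have "\<dots> = U ** matpow A (Suc n) ** adj U"
    using assms by (simp only: unitary_def matrix_mul_rid matpow.simps matrix_mul_assoc)
  finally show ?case .
qed

lemma matpow_matfun: "hermitian A \<Longrightarrow> matpow (matfun A f) n = matfun A (\<lambda>x. f x ^ n)"
  by (induction n) (simp_all add: matfun_one matfun_mult)

lemma trace_matpow_eigvals: "hermitian A \<Longrightarrow> trace (matpow A n) = (\<Sum>i\<in>UNIV. of_real (eigvals A i) ^ n)"
  using matpow_matfun[of A of_real n] by (simp add: matfun_of_real trace_matfun)

lemma trace_matpow_mult_commute: "trace (matpow (A ** B) (Suc n)) = trace (matpow (B ** A) (Suc n))"
proof -
  have "matpow (A ** B) (Suc k) = A ** matpow (B ** A) k ** B" for k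
    by (induction k) (simp_all add: matrix_mul_assoc)
  then have "trace (matpow (A ** B) (Suc n)) = trace ((matpow (B ** A) n ** B) ** A)"
    by (simp add: matrix_mul_assoc[symmetric] trace_mul_sym[of A])
  also have "\<dots> = trace (matpow (B ** A) n ** (B ** A))"
    by (simp add: matrix_mul_assoc)
  also have "\<dots> = trace (matpow (B ** A) (Suc n))"
    by (simp only: matpow_Suc')
  finally show ?thesis .
qed

text \<open>The operator norm for the sup-norm on \<open>\<complex>\<^sup>n\<close>. It is used instead of the Frobenius norm
  \<open>norm\<close> on matrices because on a diagonal matrix it is the largest modulus of an entry.\<close>
definition row_sum_norm :: "complex^'n^'n \<Rightarrow> real" where
  "row_sum_norm M = Max (range (\<lambda>i. \<Sum>j\<in>UNIV. cmod (M$i$j)))"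

lemma row_sum_le_row_sum_norm: "(\<Sum>j\<in>UNIV. cmod (M$i$j)) \<le> row_sum_norm M"
  unfolding row_sum_norm_def by (rule Max_ge) auto

lemma row_sum_norm_le: "(\<And>i. (\<Sum>j\<in>UNIV. cmod (M$i$j)) \<le> B) \<Longrightarrow> row_sum_norm M \<le> B"
  unfolding row_sum_norm_def by (subst Max_le_iff) auto

lemma row_sum_norm_nonneg: "0 \<le> row_sum_norm M"
  using row_sum_le_row_sum_norm[of M] by (meson order_trans sum_nonneg norm_ge_zero)

lemma row_sum_norm_mult: "row_sum_norm (A ** B) \<le> row_sum_norm A * row_sum_norm B"
proof (rule row_sum_norm_le)
  fix i
  have "(\<Sum>j\<in>UNIV. cmod ((A ** B)$i$j)) \<le> (\<Sum>j\<in>UNIV. \<Sum>k\<in>UNIV. cmod (A$i$k) * cmod (B$k$j))"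
    unfolding matrix_matrix_mult_def
    by (intro sum_mono) (auto intro: order_trans[OF norm_sum] simp: norm_mult)
  also have "\<dots> = (\<Sum>k\<in>UNIV. cmod (A$i$k) * (\<Sum>j\<in>UNIV. cmod (B$k$j)))"
    by (subst sum.swap) (simp add: sum_distrib_left)
  also have "\<dots> \<le> (\<Sum>k\<in>UNIV. cmod (A$i$k) * row_sum_norm B)"
    by (intro sum_mono mult_left_mono row_sum_le_row_sum_norm) auto
  also have "\<dots> \<le> row_sum_norm A * row_sum_norm B"
    by (simp add: sum_distrib_right[symmetric] mult_right_mono row_sum_le_row_sum_norm row_sum_norm_nonneg)
  finally show "(\<Sum>j\<in>UNIV. cmod ((A ** B)$i$j)) \<le> row_sum_norm A * row_sum_norm B" .
qed

lemma row_sum_norm_add: "row_sum_norm (A + B) \<le> row_sum_norm A + row_sum_norm B"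
proof (rule row_sum_norm_le)
  fix i
  have "(\<Sum>j\<in>UNIV. cmod ((A + B)$i$j)) \<le> (\<Sum>j\<in>UNIV. cmod (A$i$j) + cmod (B$i$j))"
    by (intro sum_mono) (simp add: norm_triangle_ineq)
  also have "\<dots> \<le> row_sum_norm A + row_sum_norm B"
    by (simp add: sum.distrib add_mono row_sum_le_row_sum_norm)
  finally show "(\<Sum>j\<in>UNIV. cmod ((A + B)$i$j)) \<le> row_sum_norm A + row_sum_norm B" .
qed

lemma row_sum_norm_le_entries:
  fixes M :: "complex^'n^'n" and B :: real
  assumes "\<And>i j. cmod (M$i$j) \<le> B"
  shows "row_sum_norm M \<le> CARD('n) * B"
proof (rule row_sum_norm_le)
  fix i
  have "(\<Sum>j\<in>UNIV. cmod (M$i$j)) \<le> (\<Sum>j\<in>(UNIV::'n set). B)"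
    using assms by (intro sum_mono) auto
  then show "(\<Sum>j\<in>UNIV. cmod (M$i$j)) \<le> CARD('n) * B"
    by simp
qed

lemma row_sum_norm_cdiag: "(\<And>i. cmod (f i) \<le> B) \<Longrightarrow> row_sum_norm (cdiag f) \<le> B"
  by (rule row_sum_norm_le) (simp add: cdiag_def if_distrib[of cmod] cong: if_cong)

lemma row_sum_norm_matpow: "row_sum_norm (matpow A n) \<le> row_sum_norm A ^ n"
proof (induction n)
  case 0
  show ?case
    using row_sum_norm_cdiag[of "\<lambda>i. 1" 1] by (simp add: cdiag_one)
next
  case (Suc n)
  have "row_sum_norm (matpow A (Suc n)) \<le> row_sum_norm A * row_sum_norm (matpow A n)"
    using row_sum_norm_mult by simp
  also have "\<dots> \<le> row_sum_norm A * row_sum_norm A ^ n"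
    by (intro mult_left_mono Suc row_sum_norm_nonneg)
  finally show ?case
    by simp
qed

lemma norm_trace_le_row_sum_norm: "cmod (trace M) \<le> CARD('n) * row_sum_norm M"
  for M :: "complex^'n^'n"
proof -
  have "cmod (trace M) \<le> (\<Sum>i\<in>UNIV. cmod (M$i$i))"
    unfolding trace_def by (rule norm_sum)
  also have "\<dots> \<le> (\<Sum>i\<in>(UNIV::'n set). row_sum_norm M)"
    by (intro sum_mono order_trans[OF member_le_sum row_sum_le_row_sum_norm]) auto
  finally show ?thesis
    by simp
qed


section \<open>Entrywise continuity and holomorphy\<close>

definition mat_continuous :: "'a::t2_space filter \<Rightarrow> ('a \<Rightarrow> complex^'n^'n) \<Rightarrow> bool" where
  "mat_continuous F A \<longleftrightarrow> (\<forall>i j. continuous F (\<lambda>x. A x $ i $ j))"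

lemma mat_continuous_const: "mat_continuous F (\<lambda>x. M)"
  by (simp add: mat_continuous_def)

lemma mat_continuous_mult: "mat_continuous F A \<Longrightarrow> mat_continuous F B \<Longrightarrow> mat_continuous F (\<lambda>x. A x ** B x)"
  unfolding mat_continuous_def matrix_matrix_mult_def by (simp, intro allI continuous_sum continuous_mult) auto

lemma mat_continuous_diff: "mat_continuous F A \<Longrightarrow> mat_continuous F B \<Longrightarrow> mat_continuous F (\<lambda>x. A x - B x)"
  unfolding mat_continuous_def by (simp, intro allI continuous_diff) auto

lemma mat_continuous_scaleR: "mat_continuous F A \<Longrightarrow> mat_continuous F (\<lambda>x. c *\<^sub>R A x)"
  unfolding mat_continuous_def by (simp, intro allI continuous_scaleR continuous_const) auto

lemma mat_continuous_matpow: "mat_continuous F A \<Longrightarrow> mat_continuous F (\<lambda>x. matpow (A x) n)"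
  by (induction n) (auto intro: mat_continuous_const mat_continuous_mult)

lemma continuous_trace: "mat_continuous F A \<Longrightarrow> continuous F (\<lambda>x. trace (A x))"
  unfolding mat_continuous_def trace_def by (intro continuous_sum) auto

lemma mat_continuous_cdiag: "(\<And>i. continuous F (\<lambda>x. f x i)) \<Longrightarrow> mat_continuous F (\<lambda>x. cdiag (f x))"
  unfolding mat_continuous_def cdiag_def by (simp, intro allI, case_tac "i = j") auto

lemma mat_continuous_mpowc: "continuous F f \<Longrightarrow> mat_continuous F (\<lambda>x. mpowc A (f x))"
  unfolding mpowc_def matfun_def
  apply (intro mat_continuous_mult mat_continuous_const mat_continuous_cdiag)
  subgoal for i by (cases "eigvals A i > 0") (simp_all, intro continuous_intros)
  done

definition mat_holomorphic_on :: "complex set \<Rightarrow> (complex \<Rightarrow> complex^'n^'n) \<Rightarrow> bool" where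
  "mat_holomorphic_on S A \<longleftrightarrow> (\<forall>i j. (\<lambda>x. A x $ i $ j) holomorphic_on S)"

lemma mat_holomorphic_on_const: "mat_holomorphic_on S (\<lambda>x. M)"
  by (simp add: mat_holomorphic_on_def)

lemma mat_holomorphic_on_mult:
  "mat_holomorphic_on S A \<Longrightarrow> mat_holomorphic_on S B \<Longrightarrow> mat_holomorphic_on S (\<lambda>x. A x ** B x)"
  unfolding mat_holomorphic_on_def matrix_matrix_mult_def by (simp, intro allI holomorphic_intros) auto

lemma mat_holomorphic_on_diff:
  "mat_holomorphic_on S A \<Longrightarrow> mat_holomorphic_on S B \<Longrightarrow> mat_holomorphic_on S (\<lambda>x. A x - B x)"
  unfolding mat_holomorphic_on_def by (simp, intro allI holomorphic_intros) auto

lemma mat_holomorphic_on_scaleR: "mat_holomorphic_on S A \<Longrightarrow> mat_holomorphic_on S (\<lambda>x. c *\<^sub>R A x)"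
  unfolding mat_holomorphic_on_def by (simp add: scaleR_conv_of_real, intro allI holomorphic_intros) auto

lemma mat_holomorphic_on_matpow: "mat_holomorphic_on S A \<Longrightarrow> mat_holomorphic_on S (\<lambda>x. matpow (A x) n)"
  by (induction n) (auto intro: mat_holomorphic_on_const mat_holomorphic_on_mult)

lemma holomorphic_on_trace: "mat_holomorphic_on S A \<Longrightarrow> (\<lambda>x. trace (A x)) holomorphic_on S"
  unfolding mat_holomorphic_on_def trace_def by (intro holomorphic_intros) auto

lemma mat_holomorphic_on_cdiag:
  "(\<And>i. (\<lambda>x. f x i) holomorphic_on S) \<Longrightarrow> mat_holomorphic_on S (\<lambda>x. cdiag (f x))"
  unfolding mat_holomorphic_on_def cdiag_def by (simp, intro allI, case_tac "i = j") auto

lemma mat_holomorphic_on_mpowc: "f holomorphic_on S \<Longrightarrow> mat_holomorphic_on S (\<lambda>x. mpowc A (f x))"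
  unfolding mpowc_def matfun_def
  apply (intro mat_holomorphic_on_mult mat_holomorphic_on_const mat_holomorphic_on_cdiag)
  subgoal for i by (cases "eigvals A i > 0") (simp_all, intro holomorphic_intros)
  done

lemma mat_continuous_row_sum_norm_upper:
  fixes F :: "'a::metric_space \<Rightarrow> complex^'n^'n"
  assumes "mat_continuous (at p0) F" "e > 0"
  obtains d where "d > 0" "\<And>p. dist p p0 < d \<Longrightarrow> row_sum_norm (F p) \<le> row_sum_norm (F p0) + e"
proof -
  define e' where "e' = e / CARD('n)"
  have "\<forall>\<^sub>F p in nhds p0. \<forall>i j. dist (F p $ i $ j) (F p0 $ i $ j) < e'"
  proof (intro eventually_all_finite allI)
    fix i j
    have "((\<lambda>p. F p $ i $ j) \<longlongrightarrow> F p0 $ i $ j) (nhds p0)"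
      using assms(1) tendsto_at_iff_tendsto_nhds[of "\<lambda>p. F p $ i $ j" p0]
      by (simp add: mat_continuous_def continuous_at)
    then show "\<forall>\<^sub>F p in nhds p0. dist (F p $ i $ j) (F p0 $ i $ j) < e'"
      using assms(2) by (intro tendstoD) (simp_all add: e'_def)
  qed
  then obtain d where d: "d > 0" and near: "\<And>p i j. dist p p0 < d \<Longrightarrow> dist (F p $ i $ j) (F p0 $ i $ j) < e'"
    unfolding eventually_nhds_metric by blast
  have "row_sum_norm (F p) \<le> row_sum_norm (F p0) + e" if "dist p p0 < d" for p
  proof -
    have "row_sum_norm (F p - F p0) \<le> CARD('n) * e'"
      using near[OF that] by (intro row_sum_norm_le_entries) (simp add: dist_norm less_imp_le)
    then show ?thesis
      using row_sum_norm_add[of "F p0" "F p - F p0"] by (simp add: e'_def)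
  qed
  with d that show ?thesis
    by blast
qed

lemma norm_gbinomial_le:
  fixes \<zeta> :: complex
  assumes "cmod \<zeta> \<le> R"
  shows "cmod (\<zeta> gchoose n) \<le> \<bar>(- R) gchoose n\<bar>"
proof -
  have "cmod (\<zeta> gchoose n) = (\<Prod>i=0..<n. cmod (\<zeta> - of_nat i)) / fact n"
    by (simp add: gbinomial_prod_rev norm_divide prod_norm)
  also have "\<dots> \<le> (\<Prod>i=0..<n. R + of_nat i) / fact n"
    using assms by (intro divide_right_mono prod_mono conjI order_trans[OF norm_triangle_ineq4]) auto
  also have "\<dots> = \<bar>(- R) gchoose n\<bar>"
  proof -
    have "R \<ge> 0"
      using assms norm_ge_zero order_trans by blast
    then have "\<bar>\<Prod>i=0..<n. - R - of_nat i\<bar> = (\<Prod>i=0..<n. R + of_nat i)"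
      by (simp add: abs_prod) (intro prod.cong refl, simp)
    then show ?thesis
      by (simp add: gbinomial_prod_rev)
  qed
  finally show ?thesis .
qed

lemma continuous_gbinomial: "continuous F f \<Longrightarrow> continuous F (\<lambda>x. (f x :: complex) gchoose n)"
  unfolding gbinomial_prod_rev by (intro continuous_divide continuous_prod continuous_diff continuous_const) auto

lemma holomorphic_on_gbinomial: "(\<lambda>x. (x :: complex) gchoose n) holomorphic_on S"
  unfolding gbinomial_prod_rev by (intro holomorphic_intros) auto


lemma matpow_Suc_mult_absorb: "Y ** P = Y \<Longrightarrow> matpow Y (Suc k) ** P = matpow Y (Suc k)"
  by (simp only: matpow_Suc' matrix_mul_assoc[symmetric])

lemma projection_shifted_powers_step:
  fixes Y P :: "complex^'n^'n" and c :: real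
  assumes PP: "P ** P = P" and PY: "P ** Y = Y" and YP: "Y ** P = Y"
  shows "matpow Y k ** P ** matpow (c *\<^sub>R Y - P) (Suc n)
    = c *\<^sub>R (matpow Y (Suc k) ** P ** matpow (c *\<^sub>R Y - P) n) - matpow Y k ** P ** matpow (c *\<^sub>R Y - P) n"
proof -
  have Y_P: "Y ** matpow Y k ** P = Y ** matpow Y k"
    using matpow_Suc_mult_absorb[OF YP, of k] by simp
  have "matpow Y k ** P ** Y = matpow Y k ** Y"
    by (simp add: matrix_mul_assoc[symmetric] PY)
  also have "\<dots> = Y ** matpow Y k ** P"
    by (simp add: Y_P flip: matpow_Suc')
  finally have PY': "matpow Y k ** P ** Y = Y ** matpow Y k ** P" .
  have PP': "matpow Y k ** P ** P = matpow Y k ** P"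
    by (simp add: matrix_mul_assoc[symmetric] PP)
  show ?thesis
    by (simp add: matrix_diff_ldistrib matrix_diff_rdistrib matrix_scalar_ac scalar_matrix_assoc[symmetric]
        matrix_mul_assoc PY' PP')
qed

text \<open>The last term accounts for a possible rank difference between \<open>P\<close> and \<open>Y\<close>.\<close>
lemma trace_projection_mult_shifted_powers:
  fixes Y P :: "complex^'n^'n" and c :: real and d :: "'n \<Rightarrow> real"
  assumes PP: "P ** P = P" and PY: "P ** Y = Y" and YP: "Y ** P = Y"
    and d: "\<And>i. d i \<ge> 0"
    and traces: "\<And>k. trace (matpow Y (Suc k)) = (\<Sum>i\<in>UNIV. of_real (d i) ^ Suc k)"
  shows "trace (P ** matpow (c *\<^sub>R Y - P) n)
    = of_real (\<Sum>i | d i > 0. (c * d i - 1) ^ n) + (-1)^n * (trace P - of_nat (card {i. d i > 0}))"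
proof -
  define I where "I = {i. d i > 0}"
  define T where "T = c *\<^sub>R Y - P"
  define \<delta> where "\<delta> = trace P - of_nat (card I)"
  define E :: "nat \<Rightarrow> nat \<Rightarrow> complex"
    where "E k n = (\<Sum>i\<in>I. of_real (d i) ^ k * of_real (c * d i - 1) ^ n)" for k n
  have "trace (matpow Y k ** P ** matpow T n) = E k n + (if k = 0 then (-1)^n * \<delta> else 0)" for k n
  proof (induction n arbitrary: k)
    case 0
    have "trace (matpow Y (Suc k') ** P) = E (Suc k') 0" for k'
    proof -
      have "matpow Y (Suc k') ** P = matpow Y (Suc k')"
        by (rule matpow_Suc_mult_absorb[OF YP])
      also have "trace \<dots> = (\<Sum>i\<in>I. of_real (d i) ^ Suc k')"
        unfolding traces I_def using d by (intro sum.mono_neutral_right) (auto simp: less_eq_real_def)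
      finally show ?thesis
        by (simp add: E_def)
    qed
    then show ?case
      by (cases k) (simp_all add: E_def \<delta>_def)
  next
    case (Suc n)
    have "trace (matpow Y k ** P ** matpow T (Suc n))
        = of_real c * trace (matpow Y (Suc k) ** P ** matpow T n) - trace (matpow Y k ** P ** matpow T n)"
      unfolding T_def projection_shifted_powers_step[OF PP PY YP] by (simp only: trace_sub trace_scaleR)
    also have "\<dots> = of_real c * E (Suc k) n - (E k n + (if k = 0 then (-1)^n * \<delta> else 0))"
      using Suc.IH[of "Suc k"] Suc.IH[of k] by simp
    also have "of_real c * E (Suc k) n = E k (Suc n) + E k n"
      by (simp add: E_def sum_distrib_left sum.distrib[symmetric] algebra_simps)
    finally show ?case
      by (cases "k = 0") simp_all
  qed
  from this[of 0 n] show ?thesis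
    by (simp add: T_def E_def \<delta>_def I_def)
qed

text \<open>Adding the terms for \<open>2n\<close> and \<open>2n + 1\<close> cancels \<open>\<delta>\<close> and leaves \<open>\<Sum> \<mu>\<^sub>i\<^sup>2\<^sup>n (1 + \<mu>\<^sub>i)\<close>,
  a sum of nonnegative terms, which would not tend to \<open>0\<close> if some \<open>|\<mu>\<^sub>i| \<ge> 1\<close>.\<close>
lemma power_sums_decay_imp_abs_less_1:
  fixes \<mu> :: "'i \<Rightarrow> real" and \<delta> :: complex
  assumes I: "finite I" and gt: "\<And>i. i \<in> I \<Longrightarrow> \<mu> i > -1"
    and q: "0 \<le> q" "q < 1" and C: "0 < C"
    and bound: "\<And>n. cmod (of_real (\<Sum>i\<in>I. \<mu> i ^ n) + (-1)^n * \<delta>) \<le> C * q ^ n"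
    and i: "i \<in> I"
  shows "\<bar>\<mu> i\<bar> < 1"
proof (rule ccontr)
  define e where "e n = (\<Sum>i\<in>I. \<mu> i ^ n)" for n
  assume "\<not> \<bar>\<mu> i\<bar> < 1"
  then have "1 \<le> \<bar>\<mu> i\<bar>^2"
    by (intro one_le_power) simp
  then have "1 \<le> \<mu> i ^ (2*n)" for n
    unfolding power_mult power2_abs by (rule one_le_power)
  then have ge: "1 + \<mu> i \<le> \<mu> i ^ (2*n) * (1 + \<mu> i)" for n
    using gt[OF i] by simp
  obtain n where n: "q ^ n < (1 + \<mu> i) / (2 * C)"
    using real_arch_pow_inv[of "(1 + \<mu> i) / (2 * C)" q] gt[OF i] q C by auto
  have "\<mu> i ^ (2*n) * (1 + \<mu> i) \<le> (\<Sum>j\<in>I. \<mu> j ^ (2*n) * (1 + \<mu> j))"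
    using I i gt by (intro member_le_sum) (auto simp: power_mult intro!: mult_nonneg_nonneg dest: gt)
  also have "\<dots> = e (2*n) + e (2*n+1)"
    by (simp add: e_def sum.distrib[symmetric] algebra_simps)
  also have "\<dots> \<le> cmod (of_real (e (2*n)) + (-1)^(2*n) * \<delta> + (of_real (e (2*n+1)) + (-1)^(2*n+1) * \<delta>))"
  proof -
    have "of_real (e (2*n)) + (-1)^(2*n) * \<delta> + (of_real (e (2*n+1)) + (-1)^(2*n+1) * \<delta>)
        = complex_of_real (e (2*n) + e (2*n+1))"
      by simp
    then show ?thesis
      by (simp only: norm_of_real)
  qed
  also have "\<dots> \<le> C * q^(2*n) + C * q^(2*n+1)"
    unfolding e_def by (intro order_trans[OF norm_triangle_ineq] add_mono bound)
  also have "\<dots> \<le> C * q^n + C * q^n"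
    using q C by (intro add_mono mult_left_mono power_decreasing) auto
  also have "\<dots> < 1 + \<mu> i"
    using n C by (simp add: field_simps)
  finally show False
    using ge[of n] by linarith
qed

lemma power_sums_decay_imp_defect_zero:
  fixes \<mu> :: "'i \<Rightarrow> real" and \<delta> :: complex
  assumes I: "finite I" and lt: "\<And>i. i \<in> I \<Longrightarrow> \<bar>\<mu> i\<bar> < 1" and q: "0 \<le> q" "q < 1"
    and bound: "\<And>n. cmod (of_real (\<Sum>i\<in>I. \<mu> i ^ n) + (-1)^n * \<delta>) \<le> C * q ^ n"
  shows "\<delta> = 0"
proof (rule ccontr)
  assume "\<delta> \<noteq> 0"
  have "(\<lambda>n. C * q ^ n + (\<Sum>i\<in>I. \<bar>\<mu> i\<bar> ^ n)) \<longlonglongrightarrow> C * 0 + (\<Sum>i\<in>I. 0)"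
    using q lt by (intro tendsto_intros LIMSEQ_power_zero) auto
  then have "\<forall>\<^sub>F n in sequentially. C * q ^ n + (\<Sum>i\<in>I. \<bar>\<mu> i\<bar> ^ n) < cmod \<delta>"
    using \<open>\<delta> \<noteq> 0\<close> by (intro order_tendstoD(2)) auto
  then obtain n where n: "C * q ^ n + (\<Sum>i\<in>I. \<bar>\<mu> i\<bar> ^ n) < cmod \<delta>"
    using eventually_sequentially by auto
  let ?e = "\<Sum>i\<in>I. \<mu> i ^ n"
  have "cmod \<delta> \<le> cmod (of_real ?e + (-1)^n * \<delta>) + cmod (of_real ?e :: complex)"
    using norm_triangle_ineq4[of "of_real ?e + (-1)^n * \<delta>" "of_real ?e"] by (simp add: norm_mult norm_power)
  also have "\<dots> \<le> C * q ^ n + (\<Sum>i\<in>I. \<bar>\<mu> i\<bar> ^ n)"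
    unfolding norm_of_real by (intro add_mono bound order_trans[OF sum_abs]) (simp add: power_abs)
  finally show False
    using n by linarith
qed

lemma norm_deriv_diff_le:
  fixes f g :: "complex \<Rightarrow> complex"
  assumes r: "0 < r"
    and holo: "f holomorphic_on ball z r" "g holomorphic_on ball z r"
    and cont: "continuous_on (cball z r) f" "continuous_on (cball z r) g"
    and bound: "\<And>\<zeta>. norm (z - \<zeta>) = r \<Longrightarrow> norm (f \<zeta> - g \<zeta>) \<le> B"
  shows "norm (deriv f z - deriv g z) \<le> B / r"
proof -
  have "norm ((deriv ^^ 1) (\<lambda>\<zeta>. f \<zeta> - g \<zeta>) z) \<le> fact 1 * B / r ^ 1"
    using holo cont by (intro Cauchy_inequality[OF _ _ r] holomorphic_intros continuous_intros bound)
  moreover have "deriv (\<lambda>\<zeta>. f \<zeta> - g \<zeta>) z = deriv f z - deriv g z"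
    using holo r by (intro deriv_diff holomorphic_on_imp_differentiable_at) auto
  ultimately show ?thesis
    by simp
qed

lemma tendsto_deriv_of_continuous_holomorphic:
  fixes F :: "real \<Rightarrow> complex \<Rightarrow> complex"
  assumes r: "0 < r" and \<delta>: "0 < \<delta>"
    and cont: "continuous_on (cball a \<delta> \<times> cball z r) (\<lambda>p. F (fst p) (snd p))"
    and holo: "\<And>\<alpha>. \<alpha> \<in> cball a \<delta> \<Longrightarrow> F \<alpha> holomorphic_on ball z r"
  shows "((\<lambda>\<alpha>. deriv (F \<alpha>) z) \<longlongrightarrow> deriv (F a) z) (at a)"
proof (rule tendstoI)
  fix e :: real assume e: "e > 0"
  let ?\<Omega> = "cball a \<delta> \<times> cball z r"
  have "uniformly_continuous_on ?\<Omega> (\<lambda>p. F (fst p) (snd p))"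
    by (intro compact_uniformly_continuous cont compact_Times compact_cball)
  then obtain \<eta> where \<eta>: "\<eta> > 0" and \<eta>P: "\<And>x x'. x \<in> ?\<Omega> \<Longrightarrow> x' \<in> ?\<Omega> \<Longrightarrow> dist x' x < \<eta> \<Longrightarrow>
      dist (F (fst x') (snd x')) (F (fst x) (snd x)) < e * r / 2"
    unfolding uniformly_continuous_on_def using e r by (metis half_gt_zero mult_pos_pos)
  have cont_slice: "continuous_on (cball z r) (F \<beta>)" if "\<beta> \<in> cball a \<delta>" for \<beta>
  proof -
    have "Pair \<beta> ` cball z r \<subseteq> ?\<Omega>"
      using that by auto
    then show ?thesis
      using continuous_on_compose2[OF cont continuous_on_Pair[OF continuous_on_const continuous_on_id]]
      by simp
  qed
  have "dist (deriv (F \<alpha>) z) (deriv (F a) z) < e" if \<alpha>: "dist \<alpha> a < min \<eta> \<delta>" for \<alpha>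
  proof -
    have \<alpha>\<delta>: "\<alpha> \<in> cball a \<delta>" "a \<in> cball a \<delta>"
      using \<alpha> \<delta> by (auto simp: dist_commute)
    have "norm (F \<alpha> \<zeta> - F a \<zeta>) \<le> e * r / 2" if "norm (z - \<zeta>) = r" for \<zeta>
    proof -
      have "(\<alpha>, \<zeta>) \<in> ?\<Omega>" "(a, \<zeta>) \<in> ?\<Omega>"
        using that \<alpha>\<delta> by (auto simp: dist_norm)
      moreover have "dist (\<alpha>, \<zeta>) (a, \<zeta>) < \<eta>"
        using \<alpha> by (simp add: dist_Pair_Pair)
      ultimately show ?thesis
        using \<eta>P by (fastforce simp: dist_norm)
    qed
    then have "norm (deriv (F \<alpha>) z - deriv (F a) z) \<le> e * r / 2 / r"
      using \<alpha>\<delta> by (intro norm_deriv_diff_le r holo cont_slice)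
    then show ?thesis
      using r e by (simp add: dist_norm)
  qed
  then show "\<forall>\<^sub>F \<alpha> in at a. dist (deriv (F \<alpha>) z) (deriv (F a) z) < e"
    unfolding eventually_at using \<eta> \<delta> by (intro exI[of _ "min \<eta> \<delta>"]) auto
qed

section \<open>The binomial series for the trace of a complex power\<close>

locale alpha_z_setting =
  fixes \<sigma> \<rho> :: "complex^'n^'n" and z :: real
  assumes density: "density_operator \<rho>" and psd_\<sigma>: "psd \<sigma>"
    and ker_\<sigma>_\<rho>: "ker \<sigma> \<subseteq> ker \<rho>" and z_nonzero: "z \<noteq> 0"
begin

lemma psd_\<rho>: "psd \<rho>"
  using density by (simp add: density_operator_def)

lemma hermitian_\<rho>: "hermitian \<rho>"
  using psd_\<rho> by (rule psd_hermitian)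

abbreviation r :: "'n \<Rightarrow> real" where
  "r \<equiv> eigvals \<rho>"

abbreviation V :: "complex^'n^'n" where
  "V \<equiv> eigvecs \<rho>"

abbreviation P :: "complex^'n^'n" where
  "P \<equiv> mpowc \<rho> 0"

lemma sum_eigvals_\<rho>: "(\<Sum>i\<in>UNIV. r i) = 1"
proof -
  have "complex_of_real (\<Sum>i\<in>UNIV. r i) = trace \<rho>"
    using trace_matfun[OF hermitian_\<rho>, of of_real] by (simp add: matfun_of_real[OF hermitian_\<rho>])
  then show ?thesis
    using density by (simp add: density_operator_def) (metis of_real_eq_1_iff of_real_sum)
qed

text \<open>The factor that puts the eigenvalues of \<open>\<rho>\<^sup>1\<^sup>/\<^sup>z\<close> into \<open>(0, 1]\<close>.\<close>
definition spectral_scale :: real where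
  "spectral_scale = 1 / Max ((\<lambda>i. r i powr (1 / z)) ` {i. r i > 0})"

lemma spectral_scale_eigvals:
  assumes "r i > 0"
  shows "0 < spectral_scale * r i powr (1 / z)" "spectral_scale * r i powr (1 / z) \<le> 1"
proof -
  define M where "M = Max ((\<lambda>i. r i powr (1 / z)) ` {i. r i > 0})"
  have le: "r i powr (1 / z) \<le> M"
    unfolding M_def using assms by (intro Max_ge) auto
  moreover have pos: "r i powr (1 / z) > 0"
    using assms by simp
  ultimately have "0 < M"
    by linarith
  then show "0 < spectral_scale * r i powr (1 / z)" "spectral_scale * r i powr (1 / z) \<le> 1"
    using divide_pos_pos[OF pos \<open>0 < M\<close>] divide_le_eq_1_pos[OF \<open>0 < M\<close>] le
    by (simp_all add: spectral_scale_def M_def[symmetric])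
qed

lemma spectral_scale_pos: "spectral_scale > 0"
proof -
  obtain i where "r i > 0"
    using sum_eigvals_\<rho> psd_eigvals_nonneg[OF psd_\<rho>]
    by (metis less_eq_real_def sum.neutral zero_neq_one)
  then show ?thesis
    using spectral_scale_eigvals(1) by (auto simp: zero_less_mult_iff)
qed

text \<open>The operator \<open>\<rho>\<^sup>\<alpha>\<^sup>/\<^sup>(\<^sup>2\<^sup>\<zeta>\<^sup>) \<sigma>\<^sup>(\<^sup>1\<^sup>-\<^sup>\<alpha>\<^sup>)\<^sup>/\<^sup>\<zeta> \<rho>\<^sup>\<alpha>\<^sup>/\<^sup>(\<^sup>2\<^sup>\<zeta>\<^sup>)\<close> has, for real \<open>\<zeta>\<close>, the same nonzero spectrum as
  the operator in the theorem, but unlike it, it is supported in the support \<open>P\<close> of \<open>\<rho>\<close>, and it is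
  defined and holomorphic for complex \<open>\<zeta> \<noteq> 0\<close>.\<close>
definition Y :: "real \<Rightarrow> complex \<Rightarrow> complex^'n^'n" where
  "Y \<alpha> \<zeta> = mpowc \<rho> (of_real \<alpha> / (2 * \<zeta>)) ** mpowc \<sigma> (of_real (1 - \<alpha>) / \<zeta>) ** mpowc \<rho> (of_real \<alpha> / (2 * \<zeta>))"

definition T :: "real \<Rightarrow> complex \<Rightarrow> complex^'n^'n" where
  "T \<alpha> \<zeta> = spectral_scale *\<^sub>R Y \<alpha> \<zeta> - P"

definition moment :: "nat \<Rightarrow> real \<Rightarrow> complex \<Rightarrow> complex" where
  "moment n \<alpha> \<zeta> = trace (P ** matpow (T \<alpha> \<zeta>) n)"

text \<open>\<open>\<Psi> \<alpha> \<zeta> = spectral_scale\<^sup>-\<^sup>\<zeta> tr (P + T)\<^sup>\<zeta>\<close>, with the power expanded as a binomial series in \<open>T\<close>.\<close>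
definition Psi :: "real \<Rightarrow> complex \<Rightarrow> complex" where
  "Psi \<alpha> \<zeta> = exp (- \<zeta> * of_real (ln spectral_scale)) * (\<Sum>n. (\<zeta> gchoose n) * moment n \<alpha> \<zeta>)"

lemma P_mult_P: "P ** P = P"
  using mpowc_add[OF hermitian_\<rho>, of 0 0] by simp

lemma P_mult_Y: "P ** Y \<alpha> \<zeta> = Y \<alpha> \<zeta>" and Y_mult_P: "Y \<alpha> \<zeta> ** P = Y \<alpha> \<zeta>"
  by (simp_all add: Y_def matrix_mul_assoc mpowc_add[OF hermitian_\<rho>])
    (simp add: matrix_mul_assoc[symmetric] mpowc_add[OF hermitian_\<rho>])

lemma Y_1: "\<zeta> \<noteq> 0 \<Longrightarrow> Y 1 \<zeta> = mpowc \<rho> (1 / \<zeta>)"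
  using support_projection_absorbs_mpowc[OF psd_\<sigma> psd_\<rho> ker_\<sigma>_\<rho>]
  by (simp add: Y_def mpowc_add[OF hermitian_\<rho>] matrix_mul_assoc[symmetric])

lemma T_in_eigenbasis_at_1:
  fixes \<zeta> :: complex
  assumes "\<zeta> \<noteq> 0"
  shows "adj V ** T 1 \<zeta> ** V = cdiag (\<lambda>i. if r i > 0 then spectral_scale * exp (of_real (ln (r i)) / \<zeta>) - 1 else 0)"
proof -
  have "adj V ** T 1 \<zeta> ** V = spectral_scale *\<^sub>R (adj V ** mpowc \<rho> (1 / \<zeta>) ** V) - adj V ** P ** V"
    using assms by (simp add: T_def Y_1 matrix_diff_ldistrib matrix_diff_rdistrib
        matrix_scalar_ac scalar_matrix_assoc[symmetric])
  then show ?thesis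
    by (simp add: mpowc_def matfun_in_eigenbasis[OF hermitian_\<rho>] cdiag_scaleR cdiag_diff if_distrib
        mult.commute cong: if_cong)
qed

lemma row_sum_norm_T_1_z: "row_sum_norm (adj V ** T 1 (of_real z) ** V) < 1"
proof -
  define m where "m i = (if r i > 0 then spectral_scale * r i powr (1 / z) - 1 else 0)" for i
  have "exp (ln (r i) / z) = r i powr (1 / z)" if "r i > 0" for i
    using that by (simp add: powr_def)
  then have "(if r i > 0 then of_real spectral_scale * exp (complex_of_real (ln (r i)) / of_real z) - 1
      else 0) = complex_of_real (m i)" for i
    by (simp add: m_def exp_of_real flip: of_real_divide)
  then have "adj V ** T 1 (of_real z) ** V = cdiag (\<lambda>i. of_real (m i))"
    using z_nonzero by (simp add: T_in_eigenbasis_at_1)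
  moreover have "\<bar>m i\<bar> < 1" for i
    using spectral_scale_eigvals[of i] by (simp add: m_def)
  ultimately have "row_sum_norm (adj V ** T 1 (of_real z) ** V) \<le> Max (range (\<lambda>i. \<bar>m i\<bar>))"
    by (simp add: row_sum_norm_cdiag)
  also have "\<dots> < 1"
    using \<open>\<And>i. \<bar>m i\<bar> < 1\<close> by (simp add: Max_less_iff)
  finally show ?thesis .
qed

lemma norm_moment_le: "cmod (moment n \<alpha> \<zeta>) \<le> CARD('n) * row_sum_norm (adj V ** T \<alpha> \<zeta> ** V) ^ n"
proof -
  let ?T' = "adj V ** T \<alpha> \<zeta> ** V"
  have V: "unitary V"
    using eig_decomp(1)[OF hermitian_\<rho>] .
  have TV: "V ** ?T' ** adj V = T \<alpha> \<zeta>" and PV: "V ** (adj V ** P ** V) ** adj V = P"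
    using unitary_conj_cancel[OF unitary_adj[OF V]] by simp_all
  have "matpow (T \<alpha> \<zeta>) n = V ** matpow ?T' n ** adj V"
    using matpow_unitary_conj[OF V, of ?T' n] unfolding TV .
  then have "P ** matpow (T \<alpha> \<zeta>) n = (V ** (adj V ** P ** V) ** adj V) ** (V ** matpow ?T' n ** adj V)"
    by (simp only: PV)
  also have "\<dots> = V ** (adj V ** P ** V ** matpow ?T' n) ** adj V"
    by (simp add: matrix_mul_assoc unitary_mult_cancel[OF V])
  finally have "moment n \<alpha> \<zeta> = trace (adj V ** P ** V ** matpow ?T' n)"
    by (simp add: moment_def trace_unitary_conj[OF V])
  then have "cmod (moment n \<alpha> \<zeta>) \<le> CARD('n) * row_sum_norm (adj V ** P ** V ** matpow ?T' n)"
    by (simp only: norm_trace_le_row_sum_norm)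
  also have "row_sum_norm (adj V ** P ** V ** matpow ?T' n) \<le> 1 * row_sum_norm ?T' ^ n"
  proof (rule order_trans[OF row_sum_norm_mult], intro mult_mono row_sum_norm_matpow)
    show "row_sum_norm (adj V ** P ** V) \<le> 1"
      by (simp add: mpowc_def matfun_in_eigenbasis[OF hermitian_\<rho>] row_sum_norm_cdiag)
  qed (simp_all add: row_sum_norm_nonneg)
  finally show ?thesis
    by simp
qed

lemma mat_continuous_T_in_eigenbasis:
  "snd p \<noteq> 0 \<Longrightarrow> mat_continuous (at p) (\<lambda>p. adj V ** T (fst p) (snd p) ** V)"
  unfolding T_def Y_def
  by (intro mat_continuous_mult mat_continuous_const mat_continuous_diff mat_continuous_scaleR
      mat_continuous_mpowc continuous_intros) auto

lemma continuous_moment: "snd p \<noteq> 0 \<Longrightarrow> continuous (at p) (\<lambda>p. moment n (fst p) (snd p))"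
  unfolding moment_def T_def Y_def
  by (intro continuous_trace mat_continuous_mult mat_continuous_const mat_continuous_matpow
      mat_continuous_diff mat_continuous_scaleR mat_continuous_mpowc continuous_intros) auto

lemma holomorphic_on_moment: "0 \<notin> S \<Longrightarrow> (\<lambda>\<zeta>. moment n \<alpha> \<zeta>) holomorphic_on S"
  unfolding moment_def T_def Y_def
  by (intro holomorphic_on_trace mat_holomorphic_on_mult mat_holomorphic_on_const mat_holomorphic_on_matpow
      mat_holomorphic_on_diff mat_holomorphic_on_scaleR mat_holomorphic_on_mpowc holomorphic_intros) auto


lemma contraction_neighbourhood:
  obtains \<delta> q where "0 < \<delta>" "\<delta> < \<bar>z\<bar>" "0 \<le> q" "q < 1"
    "\<And>\<alpha> \<zeta>. \<bar>\<alpha> - 1\<bar> \<le> \<delta> \<Longrightarrow> cmod (\<zeta> - of_real z) \<le> \<delta> \<Longrightarrow> row_sum_norm (adj V ** T \<alpha> \<zeta> ** V) \<le> q"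
proof -
  define p0 :: "real \<times> complex" where "p0 = (1, of_real z)"
  define q0 where "q0 = row_sum_norm (adj V ** T 1 (of_real z) ** V)"
  have q0: "q0 < 1" "0 \<le> q0"
    using row_sum_norm_T_1_z row_sum_norm_nonneg by (simp_all add: q0_def)
  obtain d where d: "d > 0"
    and near: "\<And>p. dist p p0 < d \<Longrightarrow> row_sum_norm (adj V ** T (fst p) (snd p) ** V) \<le> q0 + (1 - q0) / 2"
    using mat_continuous_row_sum_norm_upper[OF mat_continuous_T_in_eigenbasis, of p0 "(1 - q0) / 2"]
      z_nonzero q0 by (auto simp: p0_def q0_def)
  define \<delta> where "\<delta> = min (d / 3) (\<bar>z\<bar> / 2)"
  have "row_sum_norm (adj V ** T \<alpha> \<zeta> ** V) \<le> (1 + q0) / 2"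
    if "\<bar>\<alpha> - 1\<bar> \<le> \<delta>" "cmod (\<zeta> - of_real z) \<le> \<delta>" for \<alpha> \<zeta>
  proof -
    have "dist (\<alpha>, \<zeta>) p0 \<le> dist \<alpha> 1 + dist \<zeta> (of_real z)"
      unfolding p0_def dist_Pair_Pair by (rule sqrt_sum_squares_le_sum) auto
    also have "\<dots> < d"
      using that d by (simp add: dist_norm \<delta>_def)
    finally have "row_sum_norm (adj V ** T \<alpha> \<zeta> ** V) \<le> q0 + (1 - q0) / 2"
      using near[of "(\<alpha>, \<zeta>)"] by simp
    then show ?thesis
      by (rule order_trans) (simp add: field_simps)
  qed
  moreover have "0 < \<delta>" "\<delta> < \<bar>z\<bar>"
    using d z_nonzero by (auto simp: \<delta>_def)
  ultimately show ?thesis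
    using that[of \<delta> "(1 + q0) / 2"] q0 by simp
qed

definition X :: "real \<Rightarrow> real \<Rightarrow> complex^'n^'n" where
  "X \<alpha> w = mpow \<sigma> ((1 - \<alpha>) / (2 * w)) ** mpow \<rho> (\<alpha> / w) ** mpow \<sigma> ((1 - \<alpha>) / (2 * w))"

lemma psd_X: "psd (X \<alpha> w)"
proof -
  have "psd (mpow \<rho> (\<alpha> / w))"
    unfolding mpow_eq_matfun
    by (rule psd_matfun[where g = "\<lambda>x. if x > 0 then x powr (\<alpha> / w) else 0"]) auto
  then show ?thesis
    unfolding X_def by (intro psd_hermitian_sandwich) (simp only: mpow_eq_mpowc hermitian_mpowc_of_real)
qed

lemma trace_matpow_Y_eq_X:
  assumes "w \<noteq> 0"
  shows "trace (matpow (Y \<alpha> (of_real w)) (Suc k)) = trace (matpow (X \<alpha> w) (Suc k))"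
proof -
  define S where "S = mpowc \<sigma> (of_real ((1 - \<alpha>) / (2 * w)))"
  define R where "R = mpowc \<rho> (of_real (\<alpha> / (2 * w)))"
  have "(1 - \<alpha>) / (2 * w) + (1 - \<alpha>) / (2 * w) = (1 - \<alpha>) / w" "\<alpha> / (2 * w) + \<alpha> / (2 * w) = \<alpha> / w"
    using assms by (simp_all add: field_simps)
  then have SS: "S ** S = mpowc \<sigma> (of_real (1 - \<alpha>) / of_real w)" and RR: "R ** R = mpow \<rho> (\<alpha> / w)"
    unfolding S_def R_def mpow_eq_mpowc
    by (simp_all only: mpowc_add[OF psd_hermitian[OF psd_\<sigma>]] mpowc_add[OF hermitian_\<rho>]
        flip: of_real_add of_real_divide)
  have "Y \<alpha> (of_real w) = R ** (S ** S) ** R"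
    unfolding SS by (simp add: Y_def R_def)
  then have Y: "Y \<alpha> (of_real w) = (R ** S) ** (S ** R)"
    by (simp add: matrix_mul_assoc)
  have "X \<alpha> w = S ** (R ** R) ** S"
    unfolding RR by (simp add: X_def S_def mpow_eq_mpowc)
  then have X: "X \<alpha> w = (S ** R) ** (R ** S)"
    by (simp add: matrix_mul_assoc)
  show ?thesis
    unfolding X Y by (rule trace_matpow_mult_commute)
qed

end


locale alpha_z_neighbourhood = alpha_z_setting \<sigma> \<rho> z for \<sigma> \<rho> :: "complex^'n^'n" and z +
  fixes \<delta> q :: real
  assumes \<delta>_pos: "0 < \<delta>" and \<delta>_less: "\<delta> < \<bar>z\<bar>" and q_nonneg: "0 \<le> q" and q_less_1: "q < 1"
    and contraction: "\<And>\<alpha> \<zeta>. \<bar>\<alpha> - 1\<bar> \<le> \<delta> \<Longrightarrow> cmod (\<zeta> - of_real z) \<le> \<delta> \<Longrightarrow>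
      row_sum_norm (adj V ** T \<alpha> \<zeta> ** V) \<le> q"
begin

abbreviation \<Omega> :: "(real \<times> complex) set" where
  "\<Omega> \<equiv> cball 1 \<delta> \<times> cball (of_real z) \<delta>"

lemma mem_\<Omega>_iff: "(\<alpha>, \<zeta>) \<in> \<Omega> \<longleftrightarrow> \<bar>\<alpha> - 1\<bar> \<le> \<delta> \<and> cmod (\<zeta> - of_real z) \<le> \<delta>"
  by (simp add: dist_norm norm_minus_commute abs_minus_commute)

lemma mem_\<Omega>_nonzero: "(\<alpha>, \<zeta>) \<in> \<Omega> \<Longrightarrow> \<zeta> \<noteq> 0"
  using \<delta>_less by (auto simp: mem_\<Omega>_iff)

lemma mem_\<Omega>_norm_le: "(\<alpha>, \<zeta>) \<in> \<Omega> \<Longrightarrow> cmod \<zeta> \<le> \<bar>z\<bar> + \<delta>"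
  unfolding mem_\<Omega>_iff using norm_triangle_ineq[of "\<zeta> - of_real z" "of_real z"] by auto

lemma norm_moment_le_geometric: "(\<alpha>, \<zeta>) \<in> \<Omega> \<Longrightarrow> cmod (moment n \<alpha> \<zeta>) \<le> CARD('n) * q ^ n"
proof -
  assume "(\<alpha>, \<zeta>) \<in> \<Omega>"
  then have "row_sum_norm (adj V ** T \<alpha> \<zeta> ** V) \<le> q"
    unfolding mem_\<Omega>_iff by (intro contraction) simp_all
  then have "row_sum_norm (adj V ** T \<alpha> \<zeta> ** V) ^ n \<le> q ^ n"
    using row_sum_norm_nonneg by (intro power_mono)
  then show ?thesis
    using norm_moment_le[of n \<alpha> \<zeta>] by (meson mult_left_mono of_nat_0_le_iff order_trans)
qed

definition majorant :: "nat \<Rightarrow> real" where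
  "majorant n = \<bar>(- (\<bar>z\<bar> + \<delta>)) gchoose n\<bar> * q ^ n"

lemma summable_majorant: "summable (\<lambda>n. CARD('n) * majorant n)"
proof -
  have "ereal (norm q) < conv_radius (\<lambda>n. (- (\<bar>z\<bar> + \<delta>)) gchoose n)"
    using q_nonneg q_less_1 by (simp add: conv_radius_gchoose one_ereal_def)
  from abs_summable_in_conv_radius[OF this] show ?thesis
    unfolding majorant_def using q_nonneg by (intro summable_mult) (simp add: abs_mult power_abs)
qed

lemma norm_binomial_term_le:
  "(\<alpha>, \<zeta>) \<in> \<Omega> \<Longrightarrow> cmod ((\<zeta> gchoose n) * moment n \<alpha> \<zeta>) \<le> CARD('n) * majorant n"
  unfolding norm_mult majorant_def mult.left_commute[of "real CARD('n)"]
  by (intro mult_mono norm_gbinomial_le mem_\<Omega>_norm_le norm_moment_le_geometric) auto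

lemma uniform_limit_binomial_series:
  "uniform_limit \<Omega> (\<lambda>N p. \<Sum>n<N. (snd p gchoose n) * moment n (fst p) (snd p))
    (\<lambda>p. \<Sum>n. (snd p gchoose n) * moment n (fst p) (snd p)) sequentially"
  by (intro Weierstrass_m_test[OF _ summable_majorant]) (auto intro: norm_binomial_term_le)

lemma continuous_on_Psi: "continuous_on \<Omega> (\<lambda>p. Psi (fst p) (snd p))"
proof -
  have "continuous_on \<Omega> (\<lambda>p. \<Sum>n. (snd p gchoose n) * moment n (fst p) (snd p))"
  proof (rule uniform_limit_theorem[OF _ uniform_limit_binomial_series])
    have "isCont (\<lambda>p. \<Sum>n<N. (snd p gchoose n) * moment n (fst p) (snd p)) p" if "p \<in> \<Omega>" for N p
      using mem_\<Omega>_nonzero[of "fst p" "snd p"] that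
      by (intro continuous_sum continuous_mult continuous_gbinomial continuous_snd continuous_ident
          continuous_moment) auto
    then show "\<forall>\<^sub>F N in sequentially.
        continuous_on \<Omega> (\<lambda>p. \<Sum>n<N. (snd p gchoose n) * moment n (fst p) (snd p))"
      by (simp add: continuous_at_imp_continuous_on)
  qed simp
  then show ?thesis
    unfolding Psi_def by (intro continuous_intros)
qed

lemma holomorphic_on_Psi:
  assumes "\<alpha> \<in> cball 1 \<delta>"
  shows "Psi \<alpha> holomorphic_on ball (of_real z) \<delta>"
proof -
  let ?S = "\<lambda>N \<zeta>. \<Sum>n<N. (\<zeta> gchoose n) * moment n \<alpha> \<zeta>"
  have lim: "uniform_limit (cball (of_real z) \<delta>) ?S (\<lambda>\<zeta>. \<Sum>n. (\<zeta> gchoose n) * moment n \<alpha> \<zeta>) sequentially"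
    using assms by (intro Weierstrass_m_test[OF _ summable_majorant] norm_binomial_term_le) auto
  have "(0::complex) \<notin> cball (of_real z) \<delta>"
    using \<delta>_less by (simp add: dist_norm norm_minus_commute)
  then have "?S N holomorphic_on cball (of_real z) \<delta>" for N
    by (intro holomorphic_intros holomorphic_on_gbinomial holomorphic_on_moment)
  then have "\<forall>\<^sub>F N in sequentially. continuous_on (cball (of_real z) \<delta>) (?S N) \<and>
      ?S N holomorphic_on ball (of_real z) \<delta>"
    by (intro always_eventually allI conjI holomorphic_on_imp_continuous_on
        holomorphic_on_subset[OF _ ball_subset_cball])
  from holomorphic_uniform_limit[OF this lim]
  have "(\<lambda>\<zeta>. \<Sum>n. (\<zeta> gchoose n) * moment n \<alpha> \<zeta>) holomorphic_on ball (of_real z) \<delta>"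
    by auto
  then show ?thesis
    unfolding Psi_def by (intro holomorphic_intros)
qed


text \<open>The geometric bound on the moments forces \<open>|spectral_scale \<cdot> d\<^sub>i - 1| < 1\<close> and rules out a
  rank difference between \<open>P\<close> and \<open>Y\<close>.\<close>
lemma moment_real:
  fixes w :: real and d :: "'n \<Rightarrow> real"
  assumes \<Omega>: "(\<alpha>, of_real w) \<in> \<Omega>" and d: "\<And>i. d i \<ge> 0"
    and traces: "\<And>k. trace (matpow (Y \<alpha> (of_real w)) (Suc k)) = (\<Sum>i\<in>UNIV. of_real (d i) ^ Suc k)"
  shows "moment n \<alpha> (of_real w) = of_real (\<Sum>i | d i > 0. (spectral_scale * d i - 1) ^ n)"
    and "d i > 0 \<Longrightarrow> \<bar>spectral_scale * d i - 1\<bar> < 1"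
proof -
  define I where "I = {i. d i > 0}"
  define \<mu> where "\<mu> i = spectral_scale * d i - 1" for i
  define \<delta>' where "\<delta>' = trace P - of_nat (card I)"
  have moment: "moment n \<alpha> (of_real w) = of_real (\<Sum>i\<in>I. \<mu> i ^ n) + (-1)^n * \<delta>'" for n
    using trace_projection_mult_shifted_powers[OF P_mult_P P_mult_Y Y_mult_P d traces]
    by (simp add: moment_def T_def I_def \<mu>_def \<delta>'_def)
  have gt: "\<mu> i > -1" if "i \<in> I" for i
    using that spectral_scale_pos by (simp add: I_def \<mu>_def)
  have bound: "cmod (of_real (\<Sum>i\<in>I. \<mu> i ^ n) + (-1)^n * \<delta>') \<le> CARD('n) * q ^ n" for n
    using norm_moment_le_geometric[OF \<Omega>] by (simp add: moment)
  have lt: "\<bar>\<mu> i\<bar> < 1" if "i \<in> I" for i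
    using power_sums_decay_imp_abs_less_1[OF _ gt q_nonneg q_less_1 _ bound that] by simp
  have "\<delta>' = 0"
    using power_sums_decay_imp_defect_zero[OF _ lt q_nonneg q_less_1 bound] by simp
  then show "moment n \<alpha> (of_real w) = of_real (\<Sum>i | d i > 0. (spectral_scale * d i - 1) ^ n)"
    and "d i > 0 \<Longrightarrow> \<bar>spectral_scale * d i - 1\<bar> < 1"
    using lt by (simp_all add: moment I_def \<mu>_def)
qed

text \<open>The binomial series converges termwise because \<open>|spectral_scale \<cdot> d\<^sub>i - 1| < 1\<close>.\<close>
lemma Psi_eq_sum_powr:
  fixes w :: real and d :: "'n \<Rightarrow> real"
  assumes \<Omega>: "(\<alpha>, of_real w) \<in> \<Omega>" and d: "\<And>i. d i \<ge> 0"
    and traces: "\<And>k. trace (matpow (Y \<alpha> (of_real w)) (Suc k)) = (\<Sum>i\<in>UNIV. of_real (d i) ^ Suc k)"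
  shows "Psi \<alpha> (of_real w) = of_real (\<Sum>i | d i > 0. d i powr w)"
proof -
  let ?I = "{i. d i > 0}"
  have "(\<lambda>n. (w gchoose n) * (spectral_scale * d i - 1) ^ n) sums (spectral_scale * d i) powr w"
    if "i \<in> ?I" for i
    using gen_binomial_real[OF moment_real(2)[OF \<Omega> d traces], of i w] that by simp
  then have "(\<lambda>n. \<Sum>i\<in>?I. (w gchoose n) * (spectral_scale * d i - 1) ^ n)
      sums (\<Sum>i\<in>?I. (spectral_scale * d i) powr w)"
    by (rule sums_sum)
  then have "(\<lambda>n. (w gchoose n) * (\<Sum>i\<in>?I. (spectral_scale * d i - 1) ^ n))
      sums (\<Sum>i\<in>?I. (spectral_scale * d i) powr w)"
    by (simp add: sum_distrib_left)
  then have "(\<lambda>n. complex_of_real ((w gchoose n) * (\<Sum>i\<in>?I. (spectral_scale * d i - 1) ^ n)))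
      sums of_real (\<Sum>i\<in>?I. (spectral_scale * d i) powr w)"
    by (rule sums_of_real)
  moreover have "complex_of_real ((w gchoose n) * (\<Sum>i\<in>?I. (spectral_scale * d i - 1) ^ n))
      = (of_real w gchoose n) * moment n \<alpha> (of_real w)" for n
    by (simp add: moment_real(1)[OF \<Omega> d traces] gbinomial_prod_rev)
  ultimately have "(\<Sum>n. (of_real w gchoose n) * moment n \<alpha> (of_real w))
      = of_real (\<Sum>i\<in>?I. (spectral_scale * d i) powr w)"
    by (simp add: sums_iff)
  moreover have "exp (- of_real w * of_real (ln spectral_scale)) = complex_of_real (spectral_scale powr (- w))"
    using spectral_scale_pos by (simp add: powr_def exp_of_real[symmetric])
  moreover have "spectral_scale powr (- w) * (\<Sum>i\<in>?I. (spectral_scale * d i) powr w) = (\<Sum>i\<in>?I. d i powr w)"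
    using spectral_scale_pos d by (simp add: sum_distrib_left powr_mult powr_minus field_simps)
  ultimately show ?thesis
    unfolding Psi_def by (metis of_real_mult)
qed

lemma Psi_eq_trace: "(\<alpha>, of_real w) \<in> \<Omega> \<Longrightarrow> Psi \<alpha> (of_real w) = trace (mpow (X \<alpha> w) w)"
proof -
  assume \<Omega>: "(\<alpha>, of_real w) \<in> \<Omega>"
  have herm: "hermitian (X \<alpha> w)"
    using psd_X by (rule psd_hermitian)
  have "trace (matpow (Y \<alpha> (of_real w)) (Suc k)) = (\<Sum>i\<in>UNIV. of_real (eigvals (X \<alpha> w) i) ^ Suc k)" for k
    using mem_\<Omega>_nonzero[OF \<Omega>]
    by (simp only: of_real_eq_0_iff trace_matpow_Y_eq_X trace_matpow_eigvals[OF herm] simp_thms)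
  then have "Psi \<alpha> (of_real w) = of_real (\<Sum>i | eigvals (X \<alpha> w) i > 0. eigvals (X \<alpha> w) i powr w)"
    by (rule Psi_eq_sum_powr[OF \<Omega> psd_eigvals_nonneg[OF psd_X]])
  also have "\<dots> = trace (mpow (X \<alpha> w) w)"
    by (simp add: mpow_eq_matfun trace_matfun[OF herm] sum.If_cases)
  finally show ?thesis .
qed

text \<open>For \<open>\<alpha> = 1\<close> the operator \<open>Y\<close> is \<open>\<rho>\<^sup>1\<^sup>/\<^sup>w\<close>, whose \<open>w\<close>-th power is \<open>\<rho>\<close>.\<close>
lemma Psi_1: "(1, of_real w) \<in> \<Omega> \<Longrightarrow> Psi 1 (of_real w) = 1"
proof -
  assume \<Omega>: "(1, of_real w) \<in> \<Omega>"
  then have w: "w \<noteq> 0"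
    using mem_\<Omega>_nonzero by fastforce
  define d where "d i = (if r i > 0 then r i powr (1 / w) else 0)" for i
  define f :: "real \<Rightarrow> complex"
    where "f x = (if x > 0 then exp (1 / of_real w * of_real (ln x)) else 0)" for x
  have "Y 1 (of_real w) = matfun \<rho> f"
    using w by (simp add: Y_1 mpowc_def f_def[abs_def])
  then have "trace (matpow (Y 1 (of_real w)) (Suc k)) = (\<Sum>i\<in>UNIV. f (r i) ^ Suc k)" for k
    by (simp only: matpow_matfun[OF hermitian_\<rho>] trace_matfun[OF hermitian_\<rho>])
  moreover have "f (r i) = of_real (d i)" for i
    by (simp add: f_def d_def powr_def exp_of_real flip: of_real_mult of_real_divide)
  ultimately have "trace (matpow (Y 1 (of_real w)) (Suc k)) = (\<Sum>i\<in>UNIV. of_real (d i) ^ Suc k)" for k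
    by simp
  moreover have "d i \<ge> 0" for i
    by (simp add: d_def)
  ultimately have "Psi 1 (of_real w) = of_real (\<Sum>i | d i > 0. d i powr w)"
    using Psi_eq_sum_powr[OF \<Omega>] by blast
  also have "(\<Sum>i | d i > 0. d i powr w) = (\<Sum>i\<in>UNIV. r i)"
    using psd_eigvals_nonneg[OF psd_\<rho>] w
    by (intro sum.mono_neutral_cong_left) (auto simp: d_def powr_powr less_eq_real_def)
  finally show ?thesis
    by (simp add: sum_eigvals_\<rho>)
qed

lemma has_vector_derivative_Psi:
  assumes "\<alpha> \<in> cball 1 \<delta>"
  shows "((\<lambda>w. Psi \<alpha> (of_real w)) has_vector_derivative deriv (Psi \<alpha>) (of_real z)) (at z)"
proof -
  have "Psi \<alpha> field_differentiable at (of_real z)"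
    using holomorphic_on_Psi[OF assms] \<delta>_pos by (intro holomorphic_on_imp_differentiable_at) auto
  then show ?thesis
    by (intro has_vector_derivative_real_field) (simp add: DERIV_deriv_iff_field_differentiable)
qed

lemma has_vector_derivative_trace_mpow_X:
  assumes "\<alpha> \<in> cball 1 \<delta>"
  shows "((\<lambda>w. trace (mpow (X \<alpha> w) w)) has_vector_derivative deriv (Psi \<alpha>) (of_real z)) (at z)"
proof (rule has_vector_derivative_transform_within_open[OF has_vector_derivative_Psi[OF assms] open_ball])
  show "z \<in> ball z \<delta>"
    using \<delta>_pos by simp
  fix w assume "w \<in> ball z \<delta>"
  then have "(\<alpha>, of_real w) \<in> \<Omega>"
    using assms by (simp add: dist_norm flip: of_real_diff)
  then show "Psi \<alpha> (of_real w) = trace (mpow (X \<alpha> w) w)"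
    by (rule Psi_eq_trace)
qed

lemma deriv_Psi_1: "deriv (Psi 1) (of_real z) = 0"
proof -
  have "((\<lambda>w. Psi 1 (of_real w)) has_vector_derivative 0) (at z)"
  proof (rule has_vector_derivative_transform_within_open[OF _ open_ball])
    show "((\<lambda>w. 1) has_vector_derivative 0) (at z)" "z \<in> ball z \<delta>"
      using \<delta>_pos by (auto intro: has_vector_derivative_const)
    fix w assume "w \<in> ball z \<delta>"
    then have "(1, of_real w) \<in> \<Omega>"
      using \<delta>_pos by (simp add: dist_norm flip: of_real_diff)
    then show "1 = Psi 1 (of_real w)"
      by (simp add: Psi_1)
  qed
  moreover have "((\<lambda>w. Psi 1 (of_real w)) has_vector_derivative deriv (Psi 1) (of_real z)) (at z)"
    using \<delta>_pos by (intro has_vector_derivative_Psi) simp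
  ultimately show ?thesis
    using vector_derivative_unique_at by blast
qed

end

theorem proposition2:
  fixes \<rho> \<sigma> :: "complex^'n^'n" and z :: real
  assumes "density_operator \<rho>" and "psd \<sigma>" and "ker \<sigma> \<subseteq> ker \<rho>" and "z \<noteq> 0"
  shows "\<exists>D :: real \<Rightarrow> complex.
    (\<forall>\<^sub>F \<alpha> in at 1.
       ((\<lambda>w. trace (mpow (mpow \<sigma> ((1 - \<alpha>) / (2 * w)) ** mpow \<rho> (\<alpha> / w)
                           ** mpow \<sigma> ((1 - \<alpha>) / (2 * w))) w))
         has_vector_derivative D \<alpha>) (at z))
    \<and> (D \<longlongrightarrow> 0) (at 1)"
proof -
  interpret alpha_z_setting \<sigma> \<rho> z
    using assms by unfold_locales
  obtain \<delta> q where "0 < \<delta>" "\<delta> < \<bar>z\<bar>" "0 \<le> q" "q < 1"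
    and "\<And>\<alpha> \<zeta>. \<bar>\<alpha> - 1\<bar> \<le> \<delta> \<Longrightarrow> cmod (\<zeta> - of_real z) \<le> \<delta> \<Longrightarrow>
      row_sum_norm (adj V ** T \<alpha> \<zeta> ** V) \<le> q"
    using contraction_neighbourhood by blast
  then interpret alpha_z_neighbourhood \<sigma> \<rho> z \<delta> q
    by unfold_locales
  define D where "D = (\<lambda>\<alpha>. deriv (Psi \<alpha>) (of_real z))"
  have "\<forall>\<^sub>F \<alpha> in at 1. ((\<lambda>w. trace (mpow (X \<alpha> w) w)) has_vector_derivative D \<alpha>) (at z)"
    unfolding eventually_at D_def using \<delta>_pos
    by (intro exI[of _ \<delta>]) (auto intro!: has_vector_derivative_trace_mpow_X simp: dist_commute)
  moreover have "(D \<longlongrightarrow> 0) (at 1)"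
    using tendsto_deriv_of_continuous_holomorphic[OF \<delta>_pos \<delta>_pos continuous_on_Psi holomorphic_on_Psi]
    by (simp add: D_def deriv_Psi_1)
  ultimately show ?thesis
    unfolding X_def by blast
qed

end
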